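(* Let $N=2n+1$ and $m>0$. (1) Let $\tilde s\in\tilde{\mathbb K}_m$ be topologically semisimple. Then there exists $k\in\mathbb K_m$ such that $k^{-1}\tilde sk\in M\rtimes\theta$, where $M$ is the set of matrices whose block form for $2n+1=n+1+n$ has entries: first block row $(\mathfrak o_E,0,\mathfrak p_E^{-m})$, middle row $(0,1,0)$, last block row $(\mathfrak p_E^m,0,\mathfrak o_E)$. (2) Let $t\in\mathbb K_{m,H}$ be topologically semisimple. Then there exists $k\in\mathbb K_{m,H}$ such that $k^{-1}tk\in M$, with $M$ as in (1).
   Context: Let $E/F$ be an unramified quadratic extension of non-archimedean local fields of characteristic $0$ and residue characteristic $p>2$, Galois conjugation $x\mapsto\overline x$, ring of integers $\mathfrak o_E$ with maximal ideal $\mathfrak p_E$. Let $J_N$ be the $N\times N$ antidiagonal matrix with $(i,N+1-i)$-entry $(-1)^{i-1}$; $G=\mathrm{GL}_N(E)$, $\theta(x)=J_N{}^t\overline x^{-1}J_N^{-1}$, with $k^{-1}(s\rtimes\theta)k=k^{-1}s\theta(k)\rtimes\theta$; $H=\{g\in G:\theta(g)=g\}$. $\mathbb K_m$ is the group of $k\in G$ with $\det k\in\mathfrak o_E^\times$ whose block form for $2n+1=n+1+n$ has entries: first block row $(\mathfrak o_E,\mathfrak o_E,\mathfrak p_E^{-m})$, middle row $(\mathfrak p_E^m,1+\mathfrak p_E^m,\mathfrak o_E)$, last block row $(\mathfrak p_E^m,\mathfrak p_E^m,\mathfrak o_E)$; $\tilde{\mathbb K}_m=\mathbb K_m\rtimes\theta$,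 $\mathbb K_{m,H}=\mathbb K_m\cap H$. Topologically semisimple means of finite order prime to $p$ (in $G\rtimes\langle\theta\rangle$, resp. in $H$). *)

theory Defs
  imports "Jordan_Normal_Form.Determinant" "Jordan_Normal_Form.Gauss_Jordan_Elimination"
          "HOL-Computational_Algebra.Primes"
begin

text \<open>The field E is a type of class field_char_0 (characteristic 0).
  v is the normalized discrete valuation of E (its value at 0 is irrelevant);
  membership in the fractional ideal p_E^j is "x = 0 or v x \<ge> j".\<close>

definition in_pow :: "('e::field \<Rightarrow> int) \<Rightarrow> int \<Rightarrow> 'e \<Rightarrow> bool" where
  "in_pow v j x \<longleftrightarrow> x = 0 \<or> v x \<ge> j"

abbreviation in_O :: "('e::field \<Rightarrow> int) \<Rightarrow> 'e \<Rightarrow> bool" where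
  "in_O v x \<equiv> in_pow v 0 x"

definition is_unit_O :: "('e::field \<Rightarrow> int) \<Rightarrow> 'e \<Rightarrow> bool" where
  "is_unit_O v x \<longleftrightarrow> x \<noteq> 0 \<and> v x = 0"

definition discrete_valuation :: "('e::field \<Rightarrow> int) \<Rightarrow> bool" where
  "discrete_valuation v \<longleftrightarrow>
     (\<forall>x y. x \<noteq> 0 \<longrightarrow> y \<noteq> 0 \<longrightarrow> v (x * y) = v x + v y) \<and>
     (\<forall>x y. x \<noteq> 0 \<longrightarrow> y \<noteq> 0 \<longrightarrow> x + y \<noteq> 0 \<longrightarrow> v (x + y) \<ge> min (v x) (v y)) \<and>
     (\<exists>w. w \<noteq> 0 \<and> v w = 1)"

definition v_complete :: "('e::field \<Rightarrow> int) \<Rightarrow> bool" where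
  "v_complete v \<longleftrightarrow>
     (\<forall>a :: nat \<Rightarrow> 'e.
        (\<forall>k. \<exists>M. \<forall>i\<ge>M. \<forall>j\<ge>M. in_pow v k (a i - a j)) \<longrightarrow>
        (\<exists>L. \<forall>k. \<exists>M. \<forall>i\<ge>M. in_pow v k (a i - L)))"

definition residue_char_finite :: "('e::field \<Rightarrow> int) \<Rightarrow> nat \<Rightarrow> bool" where
  "residue_char_finite v p \<longleftrightarrow>
     prime p \<and> in_pow v 1 (of_nat p) \<and>
     (\<exists>R. finite R \<and> (\<forall>r\<in>R. in_O v r) \<and>
          (\<forall>x. in_O v x \<longrightarrow> (\<exists>r\<in>R. in_pow v 1 (x - r))))"

definition nonarch_local_field :: "('e::field_char_0 \<Rightarrow> int) \<Rightarrow> nat \<Rightarrow> bool" where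
  "nonarch_local_field v p \<longleftrightarrow> discrete_valuation v \<and> v_complete v \<and> residue_char_finite v p"

text \<open>sigma is a field automorphism of E of order exactly 2 (Galois conjugation of the
  quadratic extension E/F, F = fixed field), preserving the valuation; E/F unramified:
  a uniformizer of E can be chosen in F.\<close>
definition unram_quad_conj :: "('e::field \<Rightarrow> int) \<Rightarrow> ('e \<Rightarrow> 'e) \<Rightarrow> bool" where
  "unram_quad_conj v \<sigma> \<longleftrightarrow>
     (\<forall>x y. \<sigma> (x + y) = \<sigma> x + \<sigma> y) \<and> (\<forall>x y. \<sigma> (x * y) = \<sigma> x * \<sigma> y) \<and>
     \<sigma> 1 = 1 \<and> (\<forall>x. \<sigma> (\<sigma> x) = x) \<and> (\<exists>x. \<sigma> x \<noteq> x) \<and>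
     (\<forall>x. v (\<sigma> x) = v x) \<and>
     (\<exists>w. w \<noteq> 0 \<and> \<sigma> w = w \<and> v w = 1)"

definition J_mat :: "nat \<Rightarrow> 'e::field mat" where
  "J_mat N = mat N N (\<lambda>(i,j). if j = N - 1 - i then (-1) ^ i else 0)"

definition minv :: "'e::field mat \<Rightarrow> 'e mat" where
  "minv A = the (mat_inverse A)"

definition GL :: "nat \<Rightarrow> 'e::field mat set" where
  "GL N = {g \<in> carrier_mat N N. det g \<noteq> 0}"

definition theta :: "('e::field \<Rightarrow> 'e) \<Rightarrow> nat \<Rightarrow> 'e mat \<Rightarrow> 'e mat" where
  "theta \<sigma> N x = J_mat N * minv (transpose_mat (map_mat \<sigma> x)) * minv (J_mat N)"

definition H_grp :: "('e::field \<Rightarrow> 'e) \<Rightarrow> nat \<Rightarrow> 'e mat set" where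
  "H_grp \<sigma> N = {g \<in> GL N. theta \<sigma> N g = g}"

text \<open>Block index of 0-based row/column index for 2n+1 = n+1+n:
  0 = first block, 1 = middle, 2 = last.\<close>
definition blk :: "nat \<Rightarrow> nat \<Rightarrow> nat" where
  "blk n i = (if i < n then 0 else if i = n then 1 else 2)"

definition K_entry :: "('e::field \<Rightarrow> int) \<Rightarrow> int \<Rightarrow> nat \<Rightarrow> nat \<Rightarrow> 'e \<Rightarrow> bool" where
  "K_entry v m a b x =
     (if a = 0 then (if b = 2 then in_pow v (-m) x else in_O v x)
      else if a = 1 then (if b = 0 then in_pow v m x else if b = 1 then in_pow v m (x - 1) else in_O v x)
      else (if b = 2 then in_O v x else in_pow v m x))"

definition K_m :: "('e::field \<Rightarrow> int) \<Rightarrow> nat \<Rightarrow> int \<Rightarrow> 'e mat set" where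
  "K_m v n m = {k \<in> carrier_mat (2*n+1) (2*n+1). is_unit_O v (det k) \<and>
     (\<forall>i < 2*n+1. \<forall>j < 2*n+1. K_entry v m (blk n i) (blk n j) (k $$ (i,j)))}"

definition K_mH :: "('e::field \<Rightarrow> int) \<Rightarrow> ('e \<Rightarrow> 'e) \<Rightarrow> nat \<Rightarrow> int \<Rightarrow> 'e mat set" where
  "K_mH v \<sigma> n m = K_m v n m \<inter> H_grp \<sigma> (2*n+1)"

definition M_entry :: "('e::field \<Rightarrow> int) \<Rightarrow> int \<Rightarrow> nat \<Rightarrow> nat \<Rightarrow> 'e \<Rightarrow> bool" where
  "M_entry v m a b x =
     (if a = 1 \<or> b = 1 then x = (if a = 1 \<and> b = 1 then 1 else 0)
      else if a = 0 then (if b = 0 then in_O v x else in_pow v (-m) x)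
      else (if b = 0 then in_pow v m x else in_O v x))"

definition M_set :: "('e::field \<Rightarrow> int) \<Rightarrow> nat \<Rightarrow> int \<Rightarrow> 'e mat set" where
  "M_set v n m = {x \<in> carrier_mat (2*n+1) (2*n+1).
     (\<forall>i < 2*n+1. \<forall>j < 2*n+1. M_entry v m (blk n i) (blk n j) (x $$ (i,j)))}"

text \<open>Elements (g, b) stand for g \<rtimes> theta^b, b :: bool (theta^2 = 1);
  (g \<rtimes> a)(h \<rtimes> b) = g a(h) \<rtimes> ab.\<close>
definition sd_mult :: "('e::field \<Rightarrow> 'e) \<Rightarrow> nat \<Rightarrow> 'e mat \<times> bool \<Rightarrow> 'e mat \<times> bool \<Rightarrow> 'e mat \<times> bool" where
  "sd_mult \<sigma> N x y = (fst x * (if snd x then theta \<sigma> N (fst y) else fst y), snd x \<noteq> snd y)"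

fun sd_pow :: "('e::field \<Rightarrow> 'e) \<Rightarrow> nat \<Rightarrow> 'e mat \<times> bool \<Rightarrow> nat \<Rightarrow> 'e mat \<times> bool" where
  "sd_pow \<sigma> N x 0 = (1\<^sub>m N, False)"
| "sd_pow \<sigma> N x (Suc d) = sd_mult \<sigma> N (sd_pow \<sigma> N x d) x"

definition top_ss_sd :: "('e::field \<Rightarrow> 'e) \<Rightarrow> nat \<Rightarrow> nat \<Rightarrow> 'e mat \<times> bool \<Rightarrow> bool" where
  "top_ss_sd \<sigma> N p x \<longleftrightarrow>
     (\<exists>d>0. sd_pow \<sigma> N x d = (1\<^sub>m N, False)) \<and>
     coprime (LEAST d. d > 0 \<and> sd_pow \<sigma> N x d = (1\<^sub>m N, False)) p"

definition top_ss :: "nat \<Rightarrow> nat \<Rightarrow> 'e::field mat \<Rightarrow> bool" where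
  "top_ss N p t \<longleftrightarrow>
     (\<exists>d>0. t ^\<^sub>m d = 1\<^sub>m N) \<and> coprime (LEAST d. d > 0 \<and> t ^\<^sub>m d = 1\<^sub>m N) p"

end

(*
  Write theta g = jstar (g^-1), where jstar A = J sigma(A)^T J^-1 is an anti-involution
  preserving the order of matrices whose block entries have the valuations prescribed by K_m.
  If s x theta has finite order prime to p, then u = s theta(s) has finite order r prime to p,
  and the average W of the powers of u satisfies u W = W and still lies in the monoid of
  matrices of K_m-shape with (n,n)-entry = 1 mod p^m (for t in H take u = t). The n-th column
  of W and the n-th row of jstar W s^-1 pair to a sigma-fixed c = 1 mod p^m; rescaling both by a
  sigma-fixed square root of 1/c (Newton's iteration, using completeness and p <> 2) gives a
  column a and a row b with b a = 1. A rank-one perturbation of the identity built from a and b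
  is some k in K_m with k e_n = a and e_n^T k^-1 = b, and then k^-1 s theta(k) fixes e_n on both
  sides, i.e. lies in M. For t in H the data are jstar-symmetric, which forces theta(k) = k.
*)

theory Submission
  imports Defs
begin

section \<open>Matrices and the semidirect product\<close>

lemma index_mult_mat_sum:
  "A \<in> carrier_mat nr k \<Longrightarrow> B \<in> carrier_mat k nc \<Longrightarrow> i < nr \<Longrightarrow> j < nc \<Longrightarrow>
   (A * B) $$ (i,j) = (\<Sum>l<k. A $$ (i,l) * B $$ (l,j))"
  by (simp add: scalar_prod_def lessThan_atLeast0)

lemma minv_eqI:
  fixes A :: "'a::field mat"
  assumes A: "A \<in> carrier_mat k k" and B: "B \<in> carrier_mat k k" and AB: "A * B = 1\<^sub>m k"
  shows "minv A = B"
proof -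
  have BA: "B * A = 1\<^sub>m k" by (rule mat_mult_left_right_inverse[OF A B AB])
  have "A \<in> Units (ring_mat TYPE('a) k undefined)"
    unfolding Units_def using A B AB BA by (auto simp: ring_mat_simps)
  then obtain C where C: "mat_inverse A = Some C" using mat_inverse(1)[OF A, of undefined] by auto
  from mat_inverse(2)[OF A C] have AC: "A * C = 1\<^sub>m k" and C_carrier: "C \<in> carrier_mat k k" by auto
  have "C = (B * A) * C" using BA C_carrier by simp
  also have "\<dots> = B" using A B C_carrier AC by simp
  finally show ?thesis unfolding minv_def C by simp
qed

lemma sum_skip_index:
  fixes g :: "nat \<Rightarrow> int"
  shows "j \<le> k \<Longrightarrow> (\<Sum>i<k. g (if i < j then i else Suc i)) = (\<Sum>l<Suc k. g l) - g j"
proof (induction k arbitrary: j)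
  case (Suc k)
  show ?case
  proof (cases "j \<le> k")
    case True
    then show ?thesis using Suc.IH[OF True] by simp
  next
    case False
    then have "j = Suc k" using Suc by simp
    moreover have "(\<Sum>i<Suc k. g (if i < j then i else Suc i)) = (\<Sum>i<Suc k. g i)"
      by (rule sum.cong) (use \<open>j = Suc k\<close> in auto)
    ultimately show ?thesis by simp
  qed
qed simp

lemma sd_pow_twisted:
  assumes s: "s \<in> carrier_mat N N" and \<theta>s: "theta \<sigma> N s \<in> carrier_mat N N"
  shows "sd_pow \<sigma> N (s, True) (2 * j) = ((s * theta \<sigma> N s) ^\<^sub>m j, False)"
    and "sd_pow \<sigma> N (s, True) (2 * j + 1) = ((s * theta \<sigma> N s) ^\<^sub>m j * s, True)"
proof (induction j)
  case 0
  show "sd_pow \<sigma> N (s, True) (2 * 0) = ((s * theta \<sigma> N s) ^\<^sub>m 0, False)"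
    using carrier_matD(1)[OF s] by simp
  show "sd_pow \<sigma> N (s, True) (2 * 0 + 1) = ((s * theta \<sigma> N s) ^\<^sub>m 0 * s, True)"
    using s carrier_matD(1)[OF s] by (simp add: sd_mult_def)
next
  case (Suc j)
  have step_even: "sd_pow \<sigma> N (s, True) (2 * Suc j) = sd_mult \<sigma> N (sd_pow \<sigma> N (s, True) (2 * j + 1)) (s, True)"
    and step_odd: "sd_pow \<sigma> N (s, True) (2 * Suc j + 1) = sd_mult \<sigma> N (sd_pow \<sigma> N (s, True) (2 * Suc j)) (s, True)"
    by simp_all
  have "(s * theta \<sigma> N s) ^\<^sub>m j * s * theta \<sigma> N s = (s * theta \<sigma> N s) ^\<^sub>m Suc j"
    using s \<theta>s by (simp add: assoc_mult_mat[of _ N N _ N _ N])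
  then show even: "sd_pow \<sigma> N (s, True) (2 * Suc j) = ((s * theta \<sigma> N s) ^\<^sub>m Suc j, False)"
    unfolding step_even Suc(2) by (simp add: sd_mult_def)
  show "sd_pow \<sigma> N (s, True) (2 * Suc j + 1) = ((s * theta \<sigma> N s) ^\<^sub>m Suc j * s, True)"
    unfolding step_odd even by (simp add: sd_mult_def)
qed

lemma top_ss_sd_twisted_power:
  assumes "s \<in> carrier_mat N N" "theta \<sigma> N s \<in> carrier_mat N N" and "top_ss_sd \<sigma> N p (s, True)"
  obtains j where "0 < j" "(s * theta \<sigma> N s) ^\<^sub>m j = 1\<^sub>m N" "coprime j p"
proof -
  define d where "d = (LEAST d. 0 < d \<and> sd_pow \<sigma> N (s, True) d = (1\<^sub>m N, False))"
  have "\<exists>d>0. sd_pow \<sigma> N (s, True) d = (1\<^sub>m N, False)" and "coprime d p"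
    using assms(3) unfolding top_ss_sd_def d_def by auto
  then have d: "0 < d" "sd_pow \<sigma> N (s, True) d = (1\<^sub>m N, False)"
    using LeastI_ex[of "\<lambda>d. 0 < d \<and> sd_pow \<sigma> N (s, True) d = (1\<^sub>m N, False)"] unfolding d_def by auto
  obtain j where "d = 2 * j \<or> d = 2 * j + 1" by (metis evenE oddE)
  \<comment> \<open>odd powers of \<open>s \<rtimes> \<theta>\<close> lie in the non-trivial coset, so the order is even\<close>
  then have "d = 2 * j" using d sd_pow_twisted(2)[OF assms(1,2), of j] by auto
  then show ?thesis
    using that[of j] d sd_pow_twisted(1)[OF assms(1,2), of j] \<open>coprime d p\<close> by auto
qed

lemma top_ss_power:
  assumes "top_ss N p t"
  obtains d where "0 < d" "t ^\<^sub>m d = 1\<^sub>m N" "coprime d p"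
proof -
  define d where "d = (LEAST d. 0 < d \<and> t ^\<^sub>m d = 1\<^sub>m N)"
  have "\<exists>d>0. t ^\<^sub>m d = 1\<^sub>m N" and "coprime d p"
    using assms unfolding top_ss_def d_def by auto
  then show ?thesis
    using that LeastI_ex[of "\<lambda>d. 0 < d \<and> t ^\<^sub>m d = 1\<^sub>m N"] unfolding d_def by auto
qed

section \<open>Discretely valued fields\<close>

locale valued_field =
  fixes v :: "'e::field_char_0 \<Rightarrow> int"
  assumes valuation: "discrete_valuation v"
begin

lemma v_mult: "x \<noteq> 0 \<Longrightarrow> y \<noteq> 0 \<Longrightarrow> v (x * y) = v x + v y"
  using valuation unfolding discrete_valuation_def by blast

lemma v_add: "x \<noteq> 0 \<Longrightarrow> y \<noteq> 0 \<Longrightarrow> x + y \<noteq> 0 \<Longrightarrow> min (v x) (v y) \<le> v (x + y)"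
  using valuation unfolding discrete_valuation_def by blast

lemma v_one: "v 1 = 0"
  using v_mult[of 1 1] by simp

lemma v_uminus: "v (- x) = v x"
proof (cases "x = 0")
  case False
  have "v (-1) = 0" using v_mult[of "-1" "-1"] v_one by simp
  then show ?thesis using v_mult[of "-1" x] False by simp
qed simp

lemma v_inverse: "x \<noteq> 0 \<Longrightarrow> v (inverse x) = - v x"
  using v_mult[of x "inverse x"] v_one by simp

lemma in_pow_mono: "j \<le> k \<Longrightarrow> in_pow v k x \<Longrightarrow> in_pow v j x"
  unfolding in_pow_def by auto

lemma in_pow_zero [simp]: "in_pow v j 0"
  unfolding in_pow_def by simp

lemma in_pow_uminus_iff [simp]: "in_pow v j (- x) \<longleftrightarrow> in_pow v j x"
  unfolding in_pow_def by (simp add: v_uminus)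

lemma in_pow_add: "in_pow v j x \<Longrightarrow> in_pow v j y \<Longrightarrow> in_pow v j (x + y)"
  unfolding in_pow_def using v_add[of x y] by fastforce

lemma in_pow_diff: "in_pow v j x \<Longrightarrow> in_pow v j y \<Longrightarrow> in_pow v j (x - y)"
  using in_pow_add[of j x "- y"] by simp

lemma in_pow_diff_commute: "in_pow v j (x - y) \<longleftrightarrow> in_pow v j (y - x)"
  using in_pow_uminus_iff[of j "x - y"] by simp

lemma in_pow_mult: "in_pow v a x \<Longrightarrow> in_pow v b y \<Longrightarrow> in_pow v (a + b) (x * y)"
  unfolding in_pow_def by (cases "x = 0 \<or> y = 0") (auto simp: v_mult)

lemma in_pow_mult_le: "in_pow v a x \<Longrightarrow> in_pow v b y \<Longrightarrow> c \<le> a + b \<Longrightarrow> in_pow v c (x * y)"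
  using in_pow_mult in_pow_mono by blast

lemma in_pow_max: "in_pow v a x \<Longrightarrow> in_pow v b x \<Longrightarrow> in_pow v (max a b) x"
  unfolding in_pow_def by auto

lemma in_pow_sum: "(\<And>i. i \<in> S \<Longrightarrow> in_pow v j (f i)) \<Longrightarrow> in_pow v j (sum f S)"
  by (induction S rule: infinite_finite_induct) (auto intro: in_pow_add)

lemma in_O_one: "in_O v 1"
  unfolding in_pow_def using v_one by simp

lemma in_pow_prod: "(\<And>i. i \<in> S \<Longrightarrow> in_pow v (c i) (g i)) \<Longrightarrow> in_pow v (\<Sum>i\<in>S. c i) (\<Prod>i\<in>S. g i)"
  by (induction S rule: infinite_finite_induct) (auto intro: in_pow_mult in_O_one)

lemma in_pow_all_imp_zero: "(\<And>k. in_pow v k x) \<Longrightarrow> x = 0"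
  unfolding in_pow_def by (metis linorder_not_le less_add_one)

lemma not_in_pow_one: "0 < j \<Longrightarrow> \<not> in_pow v j 1"
  unfolding in_pow_def using v_one by simp

lemma in_O_if_congruent_one: "0 \<le> j \<Longrightarrow> in_pow v j (x - 1) \<Longrightarrow> in_O v x"
  using in_pow_add[OF in_pow_mono[of 0 j "x - 1"] in_O_one] by simp

lemma congruent_one_mult:
  assumes "0 \<le> j" "in_pow v j (x - 1)" "in_pow v j (y - 1)"
  shows "in_pow v j (x * y - 1)"
proof -
  have "in_pow v (j + 0) ((x - 1) * y)"
    by (intro in_pow_mult assms(2) in_O_if_congruent_one[OF assms(1,3)])
  then have "in_pow v j ((x - 1) * y + (y - 1))" using in_pow_add assms(3) by simp
  then show ?thesis by (simp add: algebra_simps)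
qed

lemma in_O_of_nat: "in_O v (of_nat k)"
  by (induction k) (auto intro: in_pow_add in_O_one)

lemma in_O_of_int: "in_O v (of_int k)"
  by (cases k rule: int_cases2) (use in_O_of_nat in auto)

lemma in_O_inverse_unit: "is_unit_O v x \<Longrightarrow> in_O v (inverse x)"
  unfolding is_unit_O_def in_pow_def by (simp add: v_inverse)

lemma in_pow_unit_mult_iff: "is_unit_O v x \<Longrightarrow> in_pow v j (x * y) \<longleftrightarrow> in_pow v j y"
  unfolding is_unit_O_def in_pow_def by (cases "y = 0") (auto simp: v_mult)

lemma in_pow_inverse_unit_mult_iff: "is_unit_O v x \<Longrightarrow> in_pow v j (inverse x * y) \<longleftrightarrow> in_pow v j y"
  by (rule in_pow_unit_mult_iff) (auto simp: is_unit_O_def v_inverse)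

lemma unit_if_congruent:
  assumes u: "is_unit_O v u" and xu: "in_pow v 1 (x - u)"
  shows "is_unit_O v x"
proof -
  have "in_O v (x - u)" "in_O v u" using in_pow_mono[OF _ xu, of 0] u by (auto simp: is_unit_O_def in_pow_def)
  then have x_O: "in_O v x" using in_pow_add by fastforce
  have "x \<noteq> 0"
    using xu u by (auto simp: is_unit_O_def in_pow_def v_uminus)
  moreover have "\<not> 0 < v x"
  proof
    assume "0 < v x"
    then have "in_pow v 1 x" unfolding in_pow_def by simp
    then have "in_pow v 1 u" using in_pow_diff[OF _ xu, of x] by simp
    then show False using u by (auto simp: is_unit_O_def in_pow_def)
  qed
  ultimately show ?thesis using x_O unfolding is_unit_O_def in_pow_def by simp
qed

lemma of_nat_unit_if_coprime:
  assumes "prime p" and p: "in_pow v 1 (of_nat p)" and "coprime r p"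
  shows "is_unit_O v (of_nat r)"
proof -
  obtain a b :: int where ab: "a * int r + b * int p = 1"
    using bezout_int[of "int r" "int p"] \<open>coprime r p\<close> by (auto simp: coprime_iff_gcd_eq_1 gcd_int_int_eq)
  then have bezout: "of_int a * of_nat r + of_int b * of_nat p = (1::'e)"
    by (metis of_int_1 of_int_add of_int_mult of_int_of_nat_eq)
  have "\<not> in_pow v 1 (of_nat r :: 'e)"
  proof
    assume "in_pow v 1 (of_nat r :: 'e)"
    then have "in_pow v 1 (of_int a * of_nat r + of_int b * of_nat p :: 'e)"
      using in_pow_add[OF in_pow_mult[OF in_O_of_int] in_pow_mult[OF in_O_of_int p]] by auto
    then show False using bezout not_in_pow_one[of 1] by simp
  qed
  then show ?thesis using in_O_of_nat[of r] unfolding is_unit_O_def in_pow_def by auto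
qed

lemma det_in_pow:
  fixes A :: "'e mat"
  assumes A: "A \<in> carrier_mat k k"
    and entries: "\<And>i j. i < k \<Longrightarrow> j < k \<Longrightarrow> in_pow v (a i - b j) (A $$ (i,j))"
  shows "in_pow v (sum a {0..<k} - sum b {0..<k}) (det A)"
  unfolding det_def'[OF A]
proof (rule in_pow_sum)
  fix \<pi> assume "\<pi> \<in> {\<pi>. \<pi> permutes {0..<k}}"
  then have \<pi>: "\<pi> permutes {0..<k}" by simp
  have "in_pow v (\<Sum>i\<in>{0..<k}. a i - b (\<pi> i)) (\<Prod>i = 0..<k. A $$ (i, \<pi> i))"
    by (rule in_pow_prod) (use entries permutes_in_image[OF \<pi>] in auto)
  moreover have "(\<Sum>i\<in>{0..<k}. a i - b (\<pi> i)) = sum a {0..<k} - sum b {0..<k}"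
    using sum.permute[OF \<pi>, of b] by (simp add: sum_subtractf comp_def)
  ultimately show "in_pow v (sum a {0..<k} - sum b {0..<k}) (signof \<pi> * (\<Prod>i = 0..<k. A $$ (i, \<pi> i)))"
    using in_pow_mult[OF in_O_of_int] by fastforce
qed

lemma converges_if_steps:
  assumes complete: "v_complete v" and steps: "\<And>k. in_pow v (j + int k) (x (Suc k) - x k)"
  shows "\<exists>L. \<forall>K. \<exists>M. \<forall>i\<ge>M. in_pow v K (x i - L)"
proof -
  have telescope: "in_pow v (j + int i) (x i' - x i)" if "i \<le> i'" for i i'
    using that
  proof (induction i')
    case (Suc i')
    show ?case
    proof (cases "i = Suc i'")
      case False
      then have "i \<le> i'" using Suc by simp
      have "x (Suc i') - x i = (x (Suc i') - x i') + (x i' - x i)" by simp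
      then show ?thesis
        using in_pow_add[OF in_pow_mono[OF _ steps[of i']] Suc.IH[OF \<open>i \<le> i'\<close>]] \<open>i \<le> i'\<close> by simp
    qed simp
  qed simp
  have "\<exists>M. \<forall>i\<ge>M. \<forall>i'\<ge>M. in_pow v K (x i - x i')" for K
  proof (intro exI allI impI)
    fix i i' assume "nat (K - j) \<le> i" "nat (K - j) \<le> i'"
    then show "in_pow v K (x i - x i')"
      using telescope[of i i'] telescope[of i' i] in_pow_diff_commute
      by (cases "i \<le> i'") (auto intro: in_pow_mono[rotated])
  qed
  then show ?thesis using complete unfolding v_complete_def by blast
qed

end

locale local_conj_field = valued_field v for v :: "'e::field_char_0 \<Rightarrow> int" +
  fixes \<sigma> :: "'e \<Rightarrow> 'e" and p :: nat
  assumes conj_add: "\<sigma> (x + y) = \<sigma> x + \<sigma> y"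
    and conj_mult: "\<sigma> (x * y) = \<sigma> x * \<sigma> y"
    and conj_one: "\<sigma> 1 = 1"
    and conj_conj: "\<sigma> (\<sigma> x) = x"
    and v_conj: "v (\<sigma> x) = v x"
    and complete: "v_complete v"
    and prime_p: "prime p"
    and p_gt_2: "2 < p"
    and residue_char: "in_pow v 1 (of_nat p)"
begin

lemma conj_zero [simp]: "\<sigma> 0 = 0"
  using conj_add[of 0 0] by simp

lemma conj_diff: "\<sigma> (x - y) = \<sigma> x - \<sigma> y"
  using conj_add[of "x - y" y] by simp

lemma conj_sum: "\<sigma> (sum f S) = (\<Sum>i\<in>S. \<sigma> (f i))"
  by (induction S rule: infinite_finite_induct) (auto simp: conj_add)

lemma conj_of_nat [simp]: "\<sigma> (of_nat k) = of_nat k"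
  by (induction k) (auto simp: conj_add conj_one)

lemma conj_numeral [simp]: "\<sigma> (numeral k) = numeral k"
  using conj_of_nat[of "numeral k"] by simp

lemma conj_uminus: "\<sigma> (- x) = - \<sigma> x"
  using conj_add[of x "- x"] by (simp add: eq_neg_iff_add_eq_0 add.commute)

lemma conj_minus_one_power_mult: "\<sigma> ((-1) ^ k * x) = (-1) ^ k * \<sigma> x"
  by (simp add: minus_one_power_iff conj_uminus)

lemma conj_inverse: "\<sigma> (inverse x) = inverse (\<sigma> x)"
proof (cases "x = 0")
  case False
  then have "\<sigma> x * \<sigma> (inverse x) = 1" using conj_mult[of x "inverse x"] conj_one by simp
  then show ?thesis by (simp add: inverse_unique)
qed simp

lemma in_pow_conj_iff [simp]: "in_pow v j (\<sigma> x) \<longleftrightarrow> in_pow v j x"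
proof -
  have "\<sigma> x = 0 \<longleftrightarrow> x = 0" by (metis conj_conj conj_zero)
  then show ?thesis unfolding in_pow_def by (simp add: v_conj)
qed

lemma two_unit: "is_unit_O v 2"
proof -
  have "\<not> p dvd 2" using p_gt_2 by (auto dest: dvd_imp_le)
  then have "coprime p 2" by (rule prime_imp_coprime[OF prime_p])
  then have "coprime 2 p" by (simp add: coprime_commute)
  then show ?thesis using of_nat_unit_if_coprime[OF prime_p residue_char, of 2] by simp
qed

lemma one_plus_unit:
  assumes "0 < j" "in_pow v j (b - 1)"
  shows "is_unit_O v (1 + b)"
proof (rule unit_if_congruent[OF two_unit])
  show "in_pow v 1 (1 + b - 2)" using in_pow_mono[of 1 j] assms by (simp add: algebra_simps)
qed

section \<open>Inverse square roots by Newton's iteration\<close>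

text \<open>With \<open>\<epsilon> = c y\<^sup>2 - 1\<close> the new error is \<open>\<epsilon>\<^sup>2 (\<epsilon> - 3) / 4\<close>, so the precision doubles.\<close>

definition newton_inv_sqrt :: "'e \<Rightarrow> 'e \<Rightarrow> 'e" where
  "newton_inv_sqrt c y = y * (3 - c * y * y) * inverse 2"

lemma newton_inv_sqrt:
  assumes "in_O v c" "in_O v y" "0 \<le> j" and err: "in_pow v j (c * y * y - 1)"
  shows "in_pow v (2 * j) (c * newton_inv_sqrt c y * newton_inv_sqrt c y - 1)"
    and "in_pow v j (newton_inv_sqrt c y - y)"
proof -
  define \<epsilon> where "\<epsilon> = c * y * y - 1"
  have \<epsilon>: "in_pow v j \<epsilon>" using err by (simp add: \<epsilon>_def)
  have \<epsilon>_O: "in_O v \<epsilon>" by (rule in_pow_mono[OF \<open>0 \<le> j\<close> \<epsilon>])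
  have inv2: "in_O v (inverse 2)" by (rule in_O_inverse_unit[OF two_unit])
  have inv4: "in_O v (inverse 4)"
    using in_pow_mult[OF inv2 inv2] by (simp flip: inverse_mult_distrib)
  have three: "in_O v 3" using in_O_of_nat[of 3] by simp
  have "c * newton_inv_sqrt c y * newton_inv_sqrt c y - 1 = \<epsilon> * \<epsilon> * (\<epsilon> - 3) * inverse 4"
    unfolding newton_inv_sqrt_def \<epsilon>_def by (simp add: field_simps)
  moreover have "in_pow v (j + j + 0 + 0) (\<epsilon> * \<epsilon> * (\<epsilon> - 3) * inverse 4)"
    by (intro in_pow_mult inv4 in_pow_diff \<epsilon> \<epsilon>_O three)
  ultimately show "in_pow v (2 * j) (c * newton_inv_sqrt c y * newton_inv_sqrt c y - 1)"
    by (metis add_0_right mult_2)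
  have "newton_inv_sqrt c y - y = - (y * \<epsilon> * inverse 2)"
    unfolding newton_inv_sqrt_def \<epsilon>_def by (simp add: field_simps)
  moreover have "in_pow v (0 + j + 0) (y * \<epsilon> * inverse 2)"
    by (intro in_pow_mult inv2 \<open>in_O v y\<close> \<epsilon>)
  ultimately show "in_pow v j (newton_inv_sqrt c y - y)"
    by (metis add_0 add_0_right in_pow_uminus_iff)
qed

lemma conj_newton_inv_sqrt: "\<sigma> c = c \<Longrightarrow> \<sigma> y = y \<Longrightarrow> \<sigma> (newton_inv_sqrt c y) = newton_inv_sqrt c y"
  unfolding newton_inv_sqrt_def conj_mult conj_diff conj_inverse conj_numeral by simp

lemma newton_inv_sqrt_iterates:
  assumes c: "\<sigma> c = c" and c_congr: "in_pow v j (c - 1)" and "0 < j"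
  shows "in_pow v (j + int k) (c * (newton_inv_sqrt c ^^ k) 1 * (newton_inv_sqrt c ^^ k) 1 - 1)
    \<and> in_pow v j ((newton_inv_sqrt c ^^ k) 1 - 1) \<and> \<sigma> ((newton_inv_sqrt c ^^ k) 1) = (newton_inv_sqrt c ^^ k) 1"
    (is "?err k \<and> ?congr k \<and> _")
proof (induction k)
  case (Suc k)
  let ?x = "(newton_inv_sqrt c ^^ k) 1"
  have c_O: "in_O v c" by (rule in_O_if_congruent_one[OF _ c_congr]) (use \<open>0 < j\<close> in simp)
  have x_O: "in_O v ?x" by (rule in_O_if_congruent_one[of j]) (use \<open>0 < j\<close> Suc in auto)
  note newton = newton_inv_sqrt[OF c_O x_O _ conjunct1[OF Suc]]
  have "?err (Suc k)" using newton(1) \<open>0 < j\<close> by (auto intro: in_pow_mono[rotated])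
  moreover have "in_pow v j (newton_inv_sqrt c ?x - ?x)"
    using newton(2) in_pow_mono[of j "j + int k"] \<open>0 < j\<close> by simp
  then have "?congr (Suc k)" using in_pow_add[OF _ conjunct1[OF conjunct2[OF Suc]]] by fastforce
  ultimately show ?case using Suc c by (simp add: conj_newton_inv_sqrt)
qed (use c_congr conj_one in simp)

lemma exists_inv_sqrt:
  assumes c: "\<sigma> c = c" and c_congr: "in_pow v j (c - 1)" and "0 < j"
  shows "\<exists>\<mu>. \<sigma> \<mu> = \<mu> \<and> in_pow v j (\<mu> - 1) \<and> \<mu> * \<mu> * c = 1"
proof -
  define x where "x k = (newton_inv_sqrt c ^^ k) 1" for k
  have c_O: "in_O v c" by (rule in_O_if_congruent_one[OF _ c_congr]) (use \<open>0 < j\<close> in simp)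
  have invariant: "in_pow v (j + int k) (c * x k * x k - 1) \<and> in_pow v j (x k - 1) \<and> \<sigma> (x k) = x k" for k
    unfolding x_def by (rule newton_inv_sqrt_iterates[OF assms])
  have x_O: "in_O v (x k)" for k by (rule in_O_if_congruent_one[of j]) (use \<open>0 < j\<close> invariant in auto)
  have "in_pow v (j + int k) (x (Suc k) - x k)" for k
    using newton_inv_sqrt(2)[OF c_O x_O _ conjunct1[OF invariant]] \<open>0 < j\<close> by (simp add: x_def)
  then obtain L where L: "\<And>K. \<exists>M. \<forall>i\<ge>M. in_pow v K (x i - L)"
    using converges_if_steps[OF complete] by blast
  have approx: "\<exists>i. in_pow v K (x i - L) \<and> in_pow v K (c * x i * x i - 1)" for K
  proof -
    obtain M where "\<forall>i\<ge>M. in_pow v K (x i - L)" using L by blast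
    moreover have "K \<le> j + int (max M (nat K))" using \<open>0 < j\<close> by (auto simp: max_def)
    then have "in_pow v K (c * x (max M (nat K)) * x (max M (nat K)) - 1)"
      using in_pow_mono conjunct1[OF invariant] by blast
    ultimately show ?thesis by (intro exI[of _ "max M (nat K)"]) simp
  qed
  obtain i\<^sub>0 where "in_O v (x i\<^sub>0 - L)" using approx by blast
  then have L_O: "in_O v L" using in_pow_diff[OF x_O[of i\<^sub>0]] by fastforce
  have "c * L * L - 1 = 0"
  proof (rule in_pow_all_imp_zero)
    fix K
    obtain i where i: "in_pow v K (x i - L)" "in_pow v K (c * x i * x i - 1)" using approx by blast
    have "in_pow v (0 + K + 0) (c * (x i - L) * (L + x i))"
      by (intro in_pow_mult c_O i in_pow_add L_O x_O)
    then have "in_pow v K ((c * x i * x i - 1) - c * (x i - L) * (L + x i))"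
      using in_pow_diff[OF i(2)] by simp
    moreover have "(c * x i * x i - 1) - c * (x i - L) * (L + x i) = c * L * L - 1"
      by (simp add: algebra_simps)
    ultimately show "in_pow v K (c * L * L - 1)" by simp
  qed
  moreover have "\<sigma> L - L = 0"
  proof (rule in_pow_all_imp_zero)
    fix K
    obtain i where "in_pow v K (x i - L)" using approx by blast
    then have "in_pow v K ((x i - L) - \<sigma> (x i - L))" by (simp add: in_pow_diff)
    moreover have "(x i - L) - \<sigma> (x i - L) = \<sigma> L - L" using invariant[of i] by (simp add: conj_diff)
    ultimately show "in_pow v K (\<sigma> L - L)" by simp
  qed
  moreover have "in_pow v j (L - 1)"
  proof -
    obtain i where "in_pow v j (x i - L)" using approx by blast
    then show ?thesis using in_pow_diff[OF conjunct1[OF conjunct2[OF invariant[of i]]]] by fastforce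
  qed
  ultimately show ?thesis by (intro exI[of _ L]) (simp add: algebra_simps)
qed

end

section \<open>The order and the monoid behind \<open>K_m\<close>\<close>

locale Km_blocks = local_conj_field v \<sigma> p for v :: "'e::field_char_0 \<Rightarrow> int" and \<sigma> p +
  fixes n :: nat and m :: int
  assumes m_pos: "0 < m"
begin

definition N :: nat where "N = 2 * n + 1"

lemma n_less_N [simp]: "n < N" unfolding N_def by simp
lemma N_minus_n [simp]: "N - 1 - n = n" "N - Suc n = n" unfolding N_def by simp_all
lemma rev_less_N: "i < N \<Longrightarrow> N - 1 - i < N" unfolding N_def by simp
lemma rev_rev: "i < N \<Longrightarrow> N - 1 - (N - 1 - i) = i" unfolding N_def by simp
lemma rev_eq_n_iff: "i < N \<Longrightarrow> N - 1 - i = n \<longleftrightarrow> i = n" unfolding N_def by auto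
lemma rev_eq_iff: "i < N \<Longrightarrow> j < N \<Longrightarrow> N - 1 - i = N - 1 - j \<longleftrightarrow> i = j" unfolding N_def by auto
lemma even_add_rev: "i < N \<Longrightarrow> even (i + (N - 1 - i))" unfolding N_def by auto

lemmas mult_assoc_N = assoc_mult_mat[of _ N N _ N _ N]
lemmas add_mult_N = add_mult_distrib_mat[of _ N N _ _ N]
lemmas mult_add_N = mult_add_distrib_mat[of _ N N _ N]
lemmas diff_mult_N = minus_mult_distrib_mat[of _ N N _ _ N]
lemmas mult_diff_N = mult_minus_distrib_mat[of _ N N _ N]
lemmas smult_mult_N = mult_smult_assoc_mat[of _ N N _ N]
lemmas mult_smult_N = mult_smult_distrib[of _ N N _ N]

text \<open>Away from the entry \<open>(n,n)\<close>, the conditions defining \<open>K_m\<close> say that the matrix preserves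
  the two lattices with exponents \<open>lat1 (blk n i)\<close> and \<open>lat2 (blk n i)\<close>, i.e. that the entries of
  block \<open>(a,b)\<close> have valuation at least \<open>weight a b\<close>. Since \<open>weight\<close> is subadditive and vanishes
  on the diagonal, these matrices form a ring, closed under products and adjugates.\<close>

definition lat1 :: "nat \<Rightarrow> int" where "lat1 b = (if b = 0 then 0 else m)"
definition lat2 :: "nat \<Rightarrow> int" where "lat2 b = (if b = 2 then m else 0)"
definition weight :: "nat \<Rightarrow> nat \<Rightarrow> int" where
  "weight a b = max (lat1 a - lat1 b) (lat2 a - lat2 b)"

lemma weight_triangle: "weight a b \<le> weight a l + weight l b"
  unfolding weight_def by auto

lemma weight_diag [simp]: "weight a a = 0"
  unfolding weight_def by auto

lemma lat_le_weight: "lat1 a - lat1 b \<le> weight a b" "lat2 a - lat2 b \<le> weight a b"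
  unfolding weight_def by auto

lemma weight_through_middle: "l \<noteq> 1 \<Longrightarrow> l \<le> 2 \<Longrightarrow> m \<le> weight 1 l + weight l 1"
  unfolding weight_def lat1_def lat2_def using m_pos by (cases l) auto

lemma weight_rev: "a \<le> 2 \<Longrightarrow> b \<le> 2 \<Longrightarrow> weight (2 - b) (2 - a) = weight a b"
  unfolding weight_def lat1_def lat2_def using m_pos
  by (cases a; cases b) (auto simp: numeral_2_eq_2 less_Suc_eq_le elim: le_SucE)

lemma blk_le_2: "blk n i \<le> 2"
  unfolding blk_def by auto

lemma blk_eq_1_iff: "blk n i = 1 \<longleftrightarrow> i = n"
  unfolding blk_def by auto

lemma blk_rev: "i < N \<Longrightarrow> blk n (N - 1 - i) = 2 - blk n i"
  unfolding blk_def N_def by auto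

lemma blk_n [simp]: "blk n n = 1"
  unfolding blk_def by simp

lemma weight_through_n: "i \<noteq> n \<Longrightarrow> m \<le> weight 1 (blk n i) + weight (blk n i) 1"
  by (rule weight_through_middle[OF _ blk_le_2]) (simp add: blk_def)

definition in_order :: "'e mat \<Rightarrow> bool" where
  "in_order A \<longleftrightarrow> A \<in> carrier_mat N N \<and>
     (\<forall>i<N. \<forall>j<N. in_pow v (weight (blk n i) (blk n j)) (A $$ (i,j)))"

definition in_Kmonoid :: "'e mat \<Rightarrow> bool" where
  "in_Kmonoid A \<longleftrightarrow> in_order A \<and> in_pow v m (A $$ (n,n) - 1)"

lemma in_orderD: "in_order A \<Longrightarrow> i < N \<Longrightarrow> j < N \<Longrightarrow> in_pow v (weight (blk n i) (blk n j)) (A $$ (i,j))"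
  unfolding in_order_def by auto

lemma in_order_carrier: "in_order A \<Longrightarrow> A \<in> carrier_mat N N"
  unfolding in_order_def by auto

lemma in_Kmonoid_order: "in_Kmonoid A \<Longrightarrow> in_order A"
  unfolding in_Kmonoid_def by auto

lemma in_Kmonoid_carrier: "in_Kmonoid A \<Longrightarrow> A \<in> carrier_mat N N"
  unfolding in_Kmonoid_def in_order_def by auto

lemma in_Kmonoid_nn: "in_Kmonoid A \<Longrightarrow> in_pow v m (A $$ (n,n) - 1)"
  unfolding in_Kmonoid_def by auto

lemma in_order_zero: "in_order (0\<^sub>m N N)"
  unfolding in_order_def by simp

lemma in_order_one: "in_order (1\<^sub>m N)"
  unfolding in_order_def by (auto simp: in_O_one)

lemma in_order_add: "in_order A \<Longrightarrow> in_order B \<Longrightarrow> in_order (A + B)"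
  unfolding in_order_def carrier_mat_def by (auto intro: in_pow_add)

lemma in_order_diff: "in_order A \<Longrightarrow> in_order B \<Longrightarrow> in_order (A - B)"
  unfolding in_order_def carrier_mat_def by (auto intro: in_pow_diff)

lemma in_order_smult: "in_O v c \<Longrightarrow> in_order A \<Longrightarrow> in_order (c \<cdot>\<^sub>m A)"
  unfolding in_order_def carrier_mat_def using in_pow_mult[of 0 c] by fastforce

lemma in_order_mult: assumes A: "in_order A" and B: "in_order B" shows "in_order (A * B)"
  unfolding in_order_def
proof (intro conjI allI impI)
  show "A * B \<in> carrier_mat N N" using in_order_carrier[OF A] in_order_carrier[OF B] by simp
  fix i j assume i: "i < N" and j: "j < N"
  show "in_pow v (weight (blk n i) (blk n j)) ((A * B) $$ (i, j))"
    unfolding index_mult_mat_sum[OF in_order_carrier[OF A] in_order_carrier[OF B] i j]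
    by (intro in_pow_sum in_pow_mult_le[OF in_orderD[OF A i] in_orderD[OF B _ j]] weight_triangle) auto
qed

lemma mult_nn_congruent:
  assumes A: "in_order A" and B: "in_order B"
  shows "in_pow v m ((A * B) $$ (n,n) - A $$ (n,n) * B $$ (n,n))"
proof -
  have "(A * B) $$ (n,n) = A $$ (n,n) * B $$ (n,n) + (\<Sum>l\<in>{..<N} - {n}. A $$ (n,l) * B $$ (l,n))"
    unfolding index_mult_mat_sum[OF in_order_carrier[OF A] in_order_carrier[OF B] n_less_N n_less_N]
    by (subst sum.remove[of _ n]) auto
  moreover have "in_pow v m (\<Sum>l\<in>{..<N} - {n}. A $$ (n,l) * B $$ (l,n))"
    by (intro in_pow_sum in_pow_mult_le[OF in_orderD[OF A n_less_N] in_orderD[OF B _ n_less_N]])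
      (auto simp: weight_through_n simp del: One_nat_def)
  ultimately show ?thesis by simp
qed

lemma in_Kmonoid_mult: assumes A: "in_Kmonoid A" and B: "in_Kmonoid B" shows "in_Kmonoid (A * B)"
proof -
  have "in_pow v m (A $$ (n,n) * B $$ (n,n) - 1)"
    using congruent_one_mult m_pos in_Kmonoid_nn[OF A] in_Kmonoid_nn[OF B] by simp
  then have "in_pow v m ((A * B) $$ (n,n) - A $$ (n,n) * B $$ (n,n) + (A $$ (n,n) * B $$ (n,n) - 1))"
    using mult_nn_congruent[OF in_Kmonoid_order[OF A] in_Kmonoid_order[OF B]] in_pow_add by blast
  then show ?thesis
    using in_order_mult[OF in_Kmonoid_order[OF A] in_Kmonoid_order[OF B]] unfolding in_Kmonoid_def by simp
qed

lemma in_Kmonoid_one: "in_Kmonoid (1\<^sub>m N)"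
  unfolding in_Kmonoid_def using in_order_one by simp

lemma in_Kmonoid_pow:
  assumes "in_Kmonoid A" shows "in_Kmonoid (A ^\<^sub>m k)"
proof -
  have "dim_row A = N" using in_Kmonoid_carrier[OF assms] by simp
  then show ?thesis by (induction k) (auto simp: in_Kmonoid_one in_Kmonoid_mult assms)
qed

lemma in_Kmonoid_smult:
  assumes c: "in_pow v m (c - 1)" and A: "in_Kmonoid A"
  shows "in_Kmonoid (c \<cdot>\<^sub>m A)"
proof -
  have "in_order (c \<cdot>\<^sub>m A)"
    using in_order_smult[OF in_O_if_congruent_one[OF _ c] in_Kmonoid_order[OF A]] m_pos by simp
  moreover have "in_pow v m (c * A $$ (n,n) - 1)"
    using congruent_one_mult[OF _ c in_Kmonoid_nn[OF A]] m_pos by simp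
  ultimately show ?thesis using in_Kmonoid_carrier[OF A] unfolding in_Kmonoid_def by simp
qed

section \<open>The anti-involution \<open>jstar\<close>\<close>

text \<open>Entrywise form of \<open>J \<sigma>(A)\<^sup>T J\<inverse>\<close>.\<close>

definition jstar :: "'e mat \<Rightarrow> 'e mat" where
  "jstar A = mat N N (\<lambda>(i,j). (-1) ^ (i + j) * \<sigma> (A $$ (N - 1 - j, N - 1 - i)))"

lemma jstar_carrier [simp]: "jstar A \<in> carrier_mat N N"
  unfolding jstar_def by simp

lemma jstar_dim [simp]: "dim_row (jstar A) = N" "dim_col (jstar A) = N"
  unfolding jstar_def by simp_all

lemma jstar_index: "i < N \<Longrightarrow> j < N \<Longrightarrow> jstar A $$ (i,j) = (-1) ^ (i + j) * \<sigma> (A $$ (N - 1 - j, N - 1 - i))"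
  unfolding jstar_def by simp

lemma minus_one_power_even: "even (a + b) \<Longrightarrow> (-1::'e) ^ a = (-1) ^ b"
  by (simp add: minus_one_power_iff split: if_splits)

lemma jstar_nn: "jstar A $$ (n,n) = \<sigma> (A $$ (n,n))"
  by (simp add: jstar_index)

lemma jstar_jstar: assumes A: "A \<in> carrier_mat N N" shows "jstar (jstar A) = A"
proof (rule eq_matI)
  fix i j assume "i < dim_row A" "j < dim_col A"
  then have i: "i < N" and j: "j < N" using A by auto
  have "(-1::'e) ^ (i + j) * (-1) ^ (N - 1 - j + (N - 1 - i)) = 1"
    using minus_one_power_even[of "i + j" "N - 1 - j + (N - 1 - i)"] i j
    by (simp add: N_def flip: power_add)
  then show "jstar (jstar A) $$ (i,j) = A $$ (i,j)"
    using i j by (simp add: jstar_index conj_minus_one_power_mult conj_conj rev_less_N rev_rev mult.assoc[symmetric])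
qed (use A in auto)

lemma jstar_mult:
  assumes A: "A \<in> carrier_mat N N" and B: "B \<in> carrier_mat N N"
  shows "jstar (A * B) = jstar B * jstar A"
proof (rule eq_matI)
  fix i j assume "i < dim_row (jstar B * jstar A)" "j < dim_col (jstar B * jstar A)"
  then have i: "i < N" and j: "j < N" by auto
  have "jstar (A * B) $$ (i,j) = (\<Sum>l<N. (-1) ^ (i + j) * (\<sigma> (A $$ (N - 1 - j, l)) * \<sigma> (B $$ (l, N - 1 - i))))"
    using i j rev_less_N
    by (simp add: jstar_index index_mult_mat_sum[OF A B] conj_sum conj_mult sum_distrib_left)
  also have "\<dots> = (\<Sum>l<N. jstar B $$ (i, N - Suc l) * jstar A $$ (N - Suc l, j))"
  proof (rule sum.cong[OF refl])
    fix l assume l: "l \<in> {..<N}"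
    have "(-1::'e) ^ (i + (N - Suc l)) * (-1) ^ ((N - Suc l) + j) = (-1) ^ (i + j)"
      using minus_one_power_even[of "i + (N - Suc l) + (N - Suc l + j)" "i + j"]
      by (simp add: power_add)
    moreover have "N - 1 - (N - Suc l) = l" "N - Suc l < N" using l by (auto simp: N_def)
    ultimately show "(-1) ^ (i + j) * (\<sigma> (A $$ (N - 1 - j, l)) * \<sigma> (B $$ (l, N - 1 - i))) =
        jstar B $$ (i, N - Suc l) * jstar A $$ (N - Suc l, j)"
      using i j by (simp add: jstar_index algebra_simps)
  qed
  also have "\<dots> = (\<Sum>l<N. jstar B $$ (i,l) * jstar A $$ (l,j))"
    by (rule sum.nat_diff_reindex)
  also have "\<dots> = (jstar B * jstar A) $$ (i,j)"
    by (rule index_mult_mat_sum[OF jstar_carrier jstar_carrier i j, symmetric])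
  finally show "jstar (A * B) $$ (i,j) = (jstar B * jstar A) $$ (i,j)" .
qed auto

lemma jstar_add: "A \<in> carrier_mat N N \<Longrightarrow> B \<in> carrier_mat N N \<Longrightarrow> jstar (A + B) = jstar A + jstar B"
  by (rule eq_matI) (auto simp: jstar_index conj_add algebra_simps rev_less_N)

lemma jstar_diff: "A \<in> carrier_mat N N \<Longrightarrow> B \<in> carrier_mat N N \<Longrightarrow> jstar (A - B) = jstar A - jstar B"
  by (rule eq_matI) (auto simp: jstar_index conj_diff algebra_simps rev_less_N)

lemma jstar_smult: "A \<in> carrier_mat N N \<Longrightarrow> jstar (c \<cdot>\<^sub>m A) = \<sigma> c \<cdot>\<^sub>m jstar A"
  by (rule eq_matI) (auto simp: jstar_index conj_mult algebra_simps rev_less_N)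

lemma jstar_one: "jstar (1\<^sub>m N) = 1\<^sub>m N"
proof (rule eq_matI)
  fix i j assume "i < dim_row (1\<^sub>m N)" "j < dim_col (1\<^sub>m N)"
  then have i: "i < N" and j: "j < N" by auto
  then show "jstar (1\<^sub>m N) $$ (i,j) = 1\<^sub>m N $$ (i,j)"
    using rev_eq_iff[OF j i] by (auto simp: jstar_index conj_one rev_less_N)
qed auto

lemma in_order_jstar: assumes A: "in_order A" shows "in_order (jstar A)"
  unfolding in_order_def
proof (intro conjI allI impI jstar_carrier)
  fix i j assume i: "i < N" and j: "j < N"
  have "in_pow v (weight (blk n (N - 1 - j)) (blk n (N - 1 - i))) (A $$ (N - 1 - j, N - 1 - i))"
    by (rule in_orderD[OF A]) (use i j rev_less_N in auto)
  then show "in_pow v (weight (blk n i) (blk n j)) (jstar A $$ (i,j))"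
    using i j blk_rev[OF i] blk_rev[OF j] weight_rev[OF blk_le_2 blk_le_2]
    by (simp add: jstar_index minus_one_power_iff)
qed

lemma in_Kmonoid_jstar: "in_Kmonoid A \<Longrightarrow> in_Kmonoid (jstar A)"
  unfolding in_Kmonoid_def using in_order_jstar by (simp add: jstar_nn flip: conj_diff[of _ 1, unfolded conj_one])

abbreviation J :: "'e mat" where "J \<equiv> J_mat N"

lemma J_carrier [simp]: "J \<in> carrier_mat N N"
  unfolding J_mat_def by simp

lemma J_dim [simp]: "dim_row J = N" "dim_col J = N"
  unfolding J_mat_def by simp_all

lemma J_index: "i < N \<Longrightarrow> j < N \<Longrightarrow> J $$ (i,j) = (if j = N - 1 - i then (-1) ^ i else 0)"
  unfolding J_mat_def by simp

lemma J_mult_index: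
  assumes X: "X \<in> carrier_mat N N" and i: "i < N" and j: "j < N"
  shows "(J * X) $$ (i,j) = (-1) ^ i * X $$ (N - 1 - i, j)"
proof -
  have "(J * X) $$ (i,j) = (\<Sum>l<N. if l = N - 1 - i then (-1) ^ i * X $$ (l,j) else 0)"
    unfolding index_mult_mat_sum[OF J_carrier X i j] by (rule sum.cong) (use i in \<open>auto simp: J_index\<close>)
  then show ?thesis using rev_less_N[OF i] by simp
qed

lemma mult_J_index:
  assumes X: "X \<in> carrier_mat N N" and i: "i < N" and j: "j < N"
  shows "(X * J) $$ (i,j) = X $$ (i, N - 1 - j) * (-1) ^ j"
proof -
  have "(X * J) $$ (i,j) = (\<Sum>l<N. if l = N - 1 - j then X $$ (i,l) * (-1) ^ j else 0)"
    unfolding index_mult_mat_sum[OF X J_carrier i j]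
  proof (rule sum.cong[OF refl])
    fix l assume l: "l \<in> {..<N}"
    then have "j = N - 1 - l \<longleftrightarrow> l = N - 1 - j" using j by (auto simp: N_def)
    moreover have "l = N - 1 - j \<Longrightarrow> (-1::'e) ^ l = (-1) ^ j"
      using even_add_rev[OF j] by (intro minus_one_power_even) (simp add: add.commute)
    ultimately show "X $$ (i,l) * J $$ (l,j) = (if l = N - 1 - j then X $$ (i,l) * (-1) ^ j else 0)"
      using l j by (auto simp: J_index)
  qed
  then show ?thesis using rev_less_N[OF j] by simp
qed

lemma J_mult_mult_J_index:
  assumes X: "X \<in> carrier_mat N N" and i: "i < N" and j: "j < N"
  shows "(J * X * J) $$ (i,j) = (-1) ^ (i + j) * X $$ (N - 1 - i, N - 1 - j)"
  using mult_J_index[OF mult_carrier_mat[OF J_carrier X] i j] J_mult_index[OF X i rev_less_N[OF j]]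
  by (simp add: power_add algebra_simps)

lemma J_mult_J: "J * J = 1\<^sub>m N"
proof (rule eq_matI)
  fix i j assume "i < dim_row (1\<^sub>m N)" "j < dim_col (1\<^sub>m N)"
  then have i: "i < N" and j: "j < N" by auto
  have "(-1::'e) ^ i * (-1) ^ (N - 1 - i) = 1"
    using minus_one_power_even[OF even_add_rev[OF i]] by (simp flip: power_add)
  then have "(-1) ^ i * J $$ (N - 1 - i, j) = 1\<^sub>m N $$ (i,j)"
    using i j rev_rev[OF i] rev_less_N[OF i] by (auto simp: J_index)
  then show "(J * J) $$ (i,j) = 1\<^sub>m N $$ (i,j)"
    using J_mult_index[OF J_carrier i j] by simp
qed auto

lemma conj_map_mult:
  assumes A: "A \<in> carrier_mat N N" and B: "B \<in> carrier_mat N N"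
  shows "map_mat \<sigma> (A * B) = map_mat \<sigma> A * map_mat \<sigma> B"
proof (rule eq_matI)
  fix i j assume "i < dim_row (map_mat \<sigma> A * map_mat \<sigma> B)" "j < dim_col (map_mat \<sigma> A * map_mat \<sigma> B)"
  then have i: "i < N" and j: "j < N" using A B by auto
  show "map_mat \<sigma> (A * B) $$ (i,j) = (map_mat \<sigma> A * map_mat \<sigma> B) $$ (i,j)"
    using i j A B
    by (simp add: index_mult_mat_sum[OF A B i j] conj_sum conj_mult
      index_mult_mat_sum[OF map_carrier_mat[THEN iffD2, OF A] map_carrier_mat[THEN iffD2, OF B] i j])
qed (use A B in auto)

lemma theta_eq_jstar:
  assumes A: "A \<in> carrier_mat N N" and B: "B \<in> carrier_mat N N" and AB: "A * B = 1\<^sub>m N"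
  shows "theta \<sigma> N A = jstar B"
proof -
  have BA: "B * A = 1\<^sub>m N" by (rule mat_mult_left_right_inverse[OF A B AB])
  have "transpose_mat (map_mat \<sigma> A) * transpose_mat (map_mat \<sigma> B) = transpose_mat (map_mat \<sigma> (B * A))"
    using A B by (simp add: transpose_mult[of _ N N _ N] conj_map_mult)
  also have "\<dots> = 1\<^sub>m N" unfolding BA by (rule eq_matI) (auto simp: conj_one)
  finally have "minv (transpose_mat (map_mat \<sigma> A)) = transpose_mat (map_mat \<sigma> B)"
    by (intro minv_eqI[of _ N]) (use A B in auto)
  moreover have "minv J = J" by (rule minv_eqI[OF J_carrier J_carrier J_mult_J])
  ultimately have \<theta>: "theta \<sigma> N A = J * transpose_mat (map_mat \<sigma> B) * J"
    unfolding theta_def by simp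
  show ?thesis
  proof (rule eq_matI)
    fix i j assume "i < dim_row (jstar B)" "j < dim_col (jstar B)"
    then have i: "i < N" and j: "j < N" by auto
    have "(J * transpose_mat (map_mat \<sigma> B) * J) $$ (i,j)
        = (-1) ^ (i + j) * transpose_mat (map_mat \<sigma> B) $$ (N - 1 - i, N - 1 - j)"
      by (rule J_mult_mult_J_index) (use B i j in auto)
    then show "theta \<sigma> N A $$ (i,j) = jstar B $$ (i,j)"
      unfolding \<theta> using B i j rev_less_N by (simp add: jstar_index del: One_nat_def)
  qed (simp_all add: \<theta>)
qed

lemma in_O_det: assumes A: "in_order A" shows "in_O v (det A)"
proof -
  have "in_pow v (sum (\<lambda>i. lat1 (blk n i)) {0..<N} - sum (\<lambda>i. lat1 (blk n i)) {0..<N}) (det A)"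
    by (rule det_in_pow[OF in_order_carrier[OF A]]) (rule in_pow_mono[OF lat_le_weight(1) in_orderD[OF A]])
  then show ?thesis by simp
qed

text \<open>The cofactor at \<open>(i,j)\<close> is the determinant of a minor whose row and column index sets
  miss \<open>j\<close> and \<open>i\<close> respectively, so the exponent bound for \<open>det\<close> becomes \<open>lat i - lat j\<close>.\<close>

lemma adj_mat_in_pow:
  fixes lat :: "nat \<Rightarrow> int"
  assumes A: "A \<in> carrier_mat N N"
    and entries: "\<And>i j. i < N \<Longrightarrow> j < N \<Longrightarrow> in_pow v (lat i - lat j) (A $$ (i,j))"
    and i: "i < N" and j: "j < N"
  shows "in_pow v (lat i - lat j) (adj_mat A $$ (i,j))"
proof -
  have N: "N = Suc (2 * n)" unfolding N_def by simp
  define skip where "skip k l = (if l < k then l else Suc l)" for k l :: nat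
  have minor: "mat_delete A j i \<in> carrier_mat (2 * n) (2 * n)"
    using mat_delete_carrier[OF A] by (simp add: N)
  have "in_pow v (sum (lat \<circ> skip j) {0..<2 * n} - sum (lat \<circ> skip i) {0..<2 * n}) (det (mat_delete A j i))"
  proof (rule det_in_pow[OF minor])
    fix i' j' assume "i' < 2 * n" "j' < 2 * n"
    then show "in_pow v ((lat \<circ> skip j) i' - (lat \<circ> skip i) j') (mat_delete A j i $$ (i',j'))"
      using A entries[of "skip j i'" "skip i j'"] by (simp add: mat_delete_def skip_def N)
  qed
  moreover have "sum (lat \<circ> skip k) {0..<2 * n} = sum lat {..<N} - lat k" if "k < N" for k
    using sum_skip_index[of k "2 * n" lat] that by (simp add: skip_def N lessThan_atLeast0)
  ultimately have "in_pow v (lat i - lat j) (det (mat_delete A j i))" using i j by simp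
  moreover have "adj_mat A $$ (i,j) = (-1) ^ (j + i) * det (mat_delete A j i)"
    unfolding adj_mat_def cofactor_def using A i j by simp
  ultimately show ?thesis by (simp add: minus_one_power_iff)
qed

lemma in_order_adj_mat: assumes A: "in_order A" shows "in_order (adj_mat A)"
  unfolding in_order_def
proof (intro conjI allI impI)
  show "adj_mat A \<in> carrier_mat N N" by (rule adj_mat(1)[OF in_order_carrier[OF A]])
  fix i j assume i: "i < N" and j: "j < N"
  have "in_pow v (lat1 (blk n i) - lat1 (blk n j)) (adj_mat A $$ (i,j))"
    and "in_pow v (lat2 (blk n i) - lat2 (blk n j)) (adj_mat A $$ (i,j))"
    by (rule adj_mat_in_pow[OF in_order_carrier[OF A] _ i j],
        rule in_pow_mono[OF lat_le_weight(1) in_orderD[OF A]] in_pow_mono[OF lat_le_weight(2) in_orderD[OF A]],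
        assumption+)+
  then show "in_pow v (weight (blk n i) (blk n j)) (adj_mat A $$ (i,j))"
    unfolding weight_def by (rule in_pow_max)
qed

lemma in_Kmonoid_if_right_inverse:
  assumes A: "in_Kmonoid A" and B: "in_order B" and AB: "A * B = 1\<^sub>m N"
  shows "in_Kmonoid B"
proof -
  have "in_pow v m (A $$ (n,n) * B $$ (n,n) - 1)"
    using mult_nn_congruent[OF in_Kmonoid_order[OF A] B] AB in_pow_diff_commute by simp
  moreover have "in_pow v (m + 0) ((A $$ (n,n) - 1) * B $$ (n,n))"
    using in_pow_mult[OF in_Kmonoid_nn[OF A], of 0] in_orderD[OF B n_less_N n_less_N] by simp
  ultimately have "in_pow v m ((A $$ (n,n) * B $$ (n,n) - 1) - (A $$ (n,n) - 1) * B $$ (n,n))"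
    by (simp add: in_pow_diff)
  then show ?thesis using B unfolding in_Kmonoid_def by (simp add: algebra_simps)
qed

lemma in_Kmonoid_minv:
  assumes A: "in_Kmonoid A" and det: "is_unit_O v (det A)"
  shows "in_Kmonoid (minv A)" and "A * minv A = 1\<^sub>m N" and "minv A * A = 1\<^sub>m N"
proof -
  have A_carrier: "A \<in> carrier_mat N N" by (rule in_Kmonoid_carrier[OF A])
  define B where "B = inverse (det A) \<cdot>\<^sub>m adj_mat A"
  have B_carrier: "B \<in> carrier_mat N N" unfolding B_def using adj_mat(1)[OF A_carrier] by simp
  have "A * B = inverse (det A) \<cdot>\<^sub>m (A * adj_mat A)"
    unfolding B_def by (rule mult_smult_N[OF A_carrier adj_mat(1)[OF A_carrier]])
  also have "\<dots> = 1\<^sub>m N"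
    using adj_mat(2)[OF A_carrier] det unfolding is_unit_O_def by (intro eq_matI) auto
  finally have AB: "A * B = 1\<^sub>m N" .
  then have "minv A = B" by (rule minv_eqI[OF A_carrier B_carrier])
  moreover have "in_order B"
    unfolding B_def by (rule in_order_smult[OF in_O_inverse_unit[OF det] in_order_adj_mat[OF in_Kmonoid_order[OF A]]])
  ultimately show "in_Kmonoid (minv A)" "A * minv A = 1\<^sub>m N" "minv A * A = 1\<^sub>m N"
    using in_Kmonoid_if_right_inverse[OF A _ AB] AB mat_mult_left_right_inverse[OF A_carrier B_carrier AB]
    by auto
qed

definition Enn :: "'e mat" where
  "Enn = mat N N (\<lambda>(i,j). if i = n \<and> j = n then 1 else 0)"

lemma Enn_carrier [simp]: "Enn \<in> carrier_mat N N"
  unfolding Enn_def by simp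

lemma Enn_dim [simp]: "dim_row Enn = N" "dim_col Enn = N"
  unfolding Enn_def by simp_all

lemma Enn_index: "i < N \<Longrightarrow> j < N \<Longrightarrow> Enn $$ (i,j) = (if i = n \<and> j = n then 1 else 0)"
  unfolding Enn_def by simp

lemma mult_Enn_index:
  assumes Z: "Z \<in> carrier_mat N N" and i: "i < N" and j: "j < N"
  shows "(Z * Enn) $$ (i,j) = (if j = n then Z $$ (i,n) else 0)"
proof -
  have "(Z * Enn) $$ (i,j) = (\<Sum>l<N. if l = n then (if j = n then Z $$ (i,n) else 0) else 0)"
    unfolding index_mult_mat_sum[OF Z Enn_carrier i j] by (rule sum.cong) (use j in \<open>auto simp: Enn_index\<close>)
  then show ?thesis by simp
qed

lemma Enn_mult_index:
  assumes Z: "Z \<in> carrier_mat N N" and i: "i < N" and j: "j < N"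
  shows "(Enn * Z) $$ (i,j) = (if i = n then Z $$ (n,j) else 0)"
proof -
  have "(Enn * Z) $$ (i,j) = (\<Sum>l<N. if l = n then (if i = n then Z $$ (n,j) else 0) else 0)"
    unfolding index_mult_mat_sum[OF Enn_carrier Z i j] by (rule sum.cong) (use i in \<open>auto simp: Enn_index\<close>)
  then show ?thesis by simp
qed

lemma Enn_mult_Enn: "Enn * Enn = Enn"
  by (rule eq_matI) (auto simp: Enn_mult_index[OF Enn_carrier] Enn_index simp del: index_mult_mat(1))

lemma Enn_sandwich: assumes Z: "Z \<in> carrier_mat N N" shows "Enn * Z * Enn = Z $$ (n,n) \<cdot>\<^sub>m Enn"
proof (rule eq_matI)
  fix i j assume "i < dim_row (Z $$ (n,n) \<cdot>\<^sub>m Enn)" "j < dim_col (Z $$ (n,n) \<cdot>\<^sub>m Enn)"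
  then have i: "i < N" and j: "j < N" by auto
  have EZ: "Enn * Z \<in> carrier_mat N N" by (rule mult_carrier_mat[OF Enn_carrier Z])
  show "(Enn * Z * Enn) $$ (i,j) = (Z $$ (n,n) \<cdot>\<^sub>m Enn) $$ (i,j)"
    using i j by (simp add: mult_Enn_index[OF EZ] Enn_mult_index[OF Z] Enn_index del: index_mult_mat(1))
qed (use Z in auto)

lemma jstar_Enn: "jstar Enn = Enn"
proof (rule eq_matI)
  fix i j assume "i < dim_row Enn" "j < dim_col Enn"
  then have i: "i < N" and j: "j < N" by auto
  then have "(N - 1 - j = n \<and> N - 1 - i = n) = (i = n \<and> j = n)" using rev_eq_n_iff by auto
  then show "jstar Enn $$ (i,j) = Enn $$ (i,j)"
    using i j by (auto simp: jstar_index Enn_index conj_one rev_less_N)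
qed auto

lemma in_Kmonoid_Enn: "in_Kmonoid Enn"
  unfolding in_Kmonoid_def in_order_def by (auto simp: Enn_index in_O_one)

lemma M_setI:
  assumes y: "in_order y" and yE: "y * Enn = Enn" and Ey: "Enn * y = Enn"
  shows "y \<in> M_set v n m"
proof -
  have y_carrier: "y \<in> carrier_mat N N" by (rule in_order_carrier[OF y])
  have "M_entry v m (blk n i) (blk n j) (y $$ (i,j))" if i: "i < N" and j: "j < N" for i j
  proof (cases "i = n \<or> j = n")
    case True
    have "y $$ (i,j) = Enn $$ (i,j)"
    proof (cases "j = n")
      case True
      then show ?thesis using mult_Enn_index[OF y_carrier i j] yE by simp
    next
      case False
      then show ?thesis using Enn_mult_index[OF y_carrier i j] Ey \<open>i = n \<or> j = n\<close> by simp
    qed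
    then show ?thesis using True i j unfolding M_entry_def blk_def by (auto simp: Enn_index)
  next
    case False
    then show ?thesis
      using in_orderD[OF y i j] blk_le_2[of i] blk_le_2[of j] blk_eq_1_iff[of i] blk_eq_1_iff[of j]
      unfolding M_entry_def weight_def lat1_def lat2_def
      by (auto simp: numeral_2_eq_2 less_Suc_eq_le le_Suc_eq simp del: One_nat_def)
  qed
  then show ?thesis using y_carrier unfolding M_set_def N_def by auto
qed

section \<open>Rank-one completion\<close>

lemma rank_one_inverse:
  fixes X :: "'e mat"
  assumes X: "X \<in> carrier_mat N N" and XX: "X * X = g \<cdot>\<^sub>m X" and abg: "a * b * g = a + b"
  shows "(a \<cdot>\<^sub>m X - 1\<^sub>m N) * (b \<cdot>\<^sub>m X - 1\<^sub>m N) = 1\<^sub>m N"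
proof -
  have "(a \<cdot>\<^sub>m X - 1\<^sub>m N) * (b \<cdot>\<^sub>m X - 1\<^sub>m N) = (a \<cdot>\<^sub>m X) * (b \<cdot>\<^sub>m X - 1\<^sub>m N) - 1\<^sub>m N * (b \<cdot>\<^sub>m X - 1\<^sub>m N)"
    by (rule diff_mult_N) (use X in auto)
  also have "(a \<cdot>\<^sub>m X) * (b \<cdot>\<^sub>m X - 1\<^sub>m N) = (a \<cdot>\<^sub>m X) * (b \<cdot>\<^sub>m X) - (a \<cdot>\<^sub>m X) * 1\<^sub>m N"
    by (rule mult_diff_N) (use X in auto)
  also have "(a \<cdot>\<^sub>m X) * (b \<cdot>\<^sub>m X) = (a * b * g) \<cdot>\<^sub>m X"
    using X XX by (simp add: smult_mult_N mult_smult_N) (rule eq_matI, auto)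
  finally show ?thesis using X abg by (intro eq_matI) (auto simp: algebra_simps)
qed

text \<open>For a column \<open>A\<close> and a row \<open>B\<close> with \<open>B * A = Enn\<close>, the matrix \<open>X = (Enn + A) * (Enn + B)\<close>
  satisfies \<open>X * X = (\<alpha> + \<beta>) X\<close> with \<open>\<alpha> = 1 + B\<^sub>n\<^sub>n\<close>, \<open>\<beta> = 1 + A\<^sub>n\<^sub>n\<close>, so \<open>k = X/\<alpha> - 1\<close> and
  \<open>X/\<beta> - 1\<close> are mutually inverse, with \<open>k * Enn = A\<close> and \<open>Enn * k\<inverse> = B\<close>.\<close>

definition rank_one_unit :: "'e mat \<Rightarrow> 'e mat \<Rightarrow> 'e \<Rightarrow> 'e mat" where
  "rank_one_unit A B c = inverse c \<cdot>\<^sub>m ((Enn + A) * (Enn + B)) - 1\<^sub>m N"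

context
  fixes A B :: "'e mat"
  assumes A: "in_Kmonoid A" "A * Enn = A" and B: "in_Kmonoid B" "Enn * B = B" and BA: "B * A = Enn"
begin

lemma Enn_mult_column: "Enn * A = A $$ (n,n) \<cdot>\<^sub>m Enn"
  using Enn_sandwich[OF in_Kmonoid_carrier[OF A(1)]] A(2)
  by (simp add: mult_assoc_N[OF Enn_carrier in_Kmonoid_carrier[OF A(1)] Enn_carrier])

lemma row_mult_Enn: "B * Enn = B $$ (n,n) \<cdot>\<^sub>m Enn"
  using Enn_sandwich[OF in_Kmonoid_carrier[OF B(1)]] B(2) by simp

lemma completion_square:
  "(Enn + A) * (Enn + B) * ((Enn + A) * (Enn + B))
     = (2 + A $$ (n,n) + B $$ (n,n)) \<cdot>\<^sub>m ((Enn + A) * (Enn + B))"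
proof -
  have A_carrier: "A \<in> carrier_mat N N" and B_carrier: "B \<in> carrier_mat N N"
    using in_Kmonoid_carrier A(1) B(1) by auto
  have "(Enn + B) * (Enn + A) = Enn * Enn + B * Enn + (Enn * A + B * A)"
    using A_carrier B_carrier by (simp add: add_mult_N mult_add_N)
  also have "\<dots> = (2 + A $$ (n,n) + B $$ (n,n)) \<cdot>\<^sub>m Enn"
    unfolding Enn_mult_Enn Enn_mult_column row_mult_Enn BA by (rule eq_matI) (auto simp: algebra_simps)
  finally have middle: "(Enn + B) * (Enn + A) = (2 + A $$ (n,n) + B $$ (n,n)) \<cdot>\<^sub>m Enn" .
  have EA: "Enn + A \<in> carrier_mat N N" and EB: "Enn + B \<in> carrier_mat N N"
    using A_carrier B_carrier by auto
  have "(Enn + A) * (Enn + B) * ((Enn + A) * (Enn + B)) = (Enn + A) * (((Enn + B) * (Enn + A)) * (Enn + B))"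
    using EA EB by (simp add: mult_assoc_N)
  also have "\<dots> = (2 + A $$ (n,n) + B $$ (n,n)) \<cdot>\<^sub>m ((Enn + A) * (Enn * (Enn + B)))"
    unfolding middle using EA EB by (simp add: smult_mult_N mult_smult_N[OF EA mult_carrier_mat[OF Enn_carrier EB]])
  also have "Enn * (Enn + B) = Enn + B"
    using B_carrier by (simp add: mult_add_N Enn_mult_Enn B(2))
  finally show ?thesis .
qed

lemma completion_mult_Enn: "(Enn + A) * (Enn + B) * Enn = (1 + B $$ (n,n)) \<cdot>\<^sub>m (Enn + A)"
proof -
  have A_carrier: "A \<in> carrier_mat N N" and B_carrier: "B \<in> carrier_mat N N"
    using in_Kmonoid_carrier A(1) B(1) by auto
  have "(Enn + B) * Enn = (1 + B $$ (n,n)) \<cdot>\<^sub>m Enn"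
    using B_carrier by (simp add: add_mult_N Enn_mult_Enn row_mult_Enn) (rule eq_matI, auto simp: algebra_simps)
  moreover have "(Enn + A) * Enn = Enn + A"
    using A_carrier by (simp add: add_mult_N Enn_mult_Enn A(2))
  ultimately show ?thesis
    using A_carrier B_carrier by (simp add: mult_assoc_N mult_smult_N)
qed

lemma Enn_mult_completion: "Enn * ((Enn + A) * (Enn + B)) = (1 + A $$ (n,n)) \<cdot>\<^sub>m (Enn + B)"
proof -
  have A_carrier: "A \<in> carrier_mat N N" and B_carrier: "B \<in> carrier_mat N N"
    using in_Kmonoid_carrier A(1) B(1) by auto
  have "Enn * (Enn + A) = (1 + A $$ (n,n)) \<cdot>\<^sub>m Enn"
    using A_carrier by (simp add: mult_add_N Enn_mult_Enn Enn_mult_column) (rule eq_matI, auto simp: algebra_simps)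
  moreover have "Enn * (Enn + B) = Enn + B"
    using B_carrier by (simp add: mult_add_N Enn_mult_Enn B(2))
  ultimately show ?thesis
    using A_carrier B_carrier by (simp flip: mult_assoc_N add: smult_mult_N)
qed

lemma jstar_completion:
  assumes "jstar B = A"
  shows "jstar ((Enn + A) * (Enn + B)) = (Enn + A) * (Enn + B)"
proof -
  have A_carrier: "A \<in> carrier_mat N N" and B_carrier: "B \<in> carrier_mat N N"
    using in_Kmonoid_carrier A(1) B(1) by auto
  have "jstar A = B" using jstar_jstar[OF B_carrier] assms by simp
  then show ?thesis
    using A_carrier B_carrier assms by (simp add: jstar_mult jstar_add jstar_Enn)
qed

lemma one_plus_nn_unit: "is_unit_O v (1 + A $$ (n,n))" "is_unit_O v (1 + B $$ (n,n))"
  using one_plus_unit m_pos in_Kmonoid_nn A(1) B(1) by auto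

lemma in_order_completion: "in_order ((Enn + A) * (Enn + B))"
  by (intro in_order_mult in_order_add in_Kmonoid_order in_Kmonoid_Enn A(1) B(1))

lemma in_order_rank_one_unit: "is_unit_O v c \<Longrightarrow> in_order (rank_one_unit A B c)"
  unfolding rank_one_unit_def
  by (intro in_order_diff in_order_smult in_O_inverse_unit in_order_completion in_order_one)

lemma rank_one_unit_inverse:
  "rank_one_unit A B (1 + B $$ (n,n)) * rank_one_unit A B (1 + A $$ (n,n)) = 1\<^sub>m N"
  "rank_one_unit A B (1 + A $$ (n,n)) * rank_one_unit A B (1 + B $$ (n,n)) = 1\<^sub>m N"
proof -
  have X: "(Enn + A) * (Enn + B) \<in> carrier_mat N N" by (rule in_order_carrier[OF in_order_completion])
  have XX: "(Enn + A) * (Enn + B) * ((Enn + A) * (Enn + B))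
      = ((1 + B $$ (n,n)) + (1 + A $$ (n,n))) \<cdot>\<^sub>m ((Enn + A) * (Enn + B))"
    using completion_square by (simp add: algebra_simps)
  show "rank_one_unit A B (1 + B $$ (n,n)) * rank_one_unit A B (1 + A $$ (n,n)) = 1\<^sub>m N"
    "rank_one_unit A B (1 + A $$ (n,n)) * rank_one_unit A B (1 + B $$ (n,n)) = 1\<^sub>m N"
    unfolding rank_one_unit_def using one_plus_nn_unit
    by (auto intro!: rank_one_inverse[OF X XX] simp: is_unit_O_def field_simps)
qed

lemma rank_one_unit_mult_Enn: "rank_one_unit A B (1 + B $$ (n,n)) * Enn = A"
proof -
  have "rank_one_unit A B (1 + B $$ (n,n)) * Enn
      = inverse (1 + B $$ (n,n)) \<cdot>\<^sub>m ((Enn + A) * (Enn + B) * Enn) - Enn"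
    unfolding rank_one_unit_def using in_order_carrier[OF in_order_completion]
    by (simp add: diff_mult_N smult_mult_N)
  then show ?thesis
    using one_plus_nn_unit(2) in_Kmonoid_carrier[OF A(1)]
    unfolding completion_mult_Enn is_unit_O_def by (intro eq_matI) (auto simp: mult.assoc[symmetric])
qed

lemma Enn_mult_rank_one_unit: "Enn * rank_one_unit A B (1 + A $$ (n,n)) = B"
proof -
  have "Enn * rank_one_unit A B (1 + A $$ (n,n))
      = inverse (1 + A $$ (n,n)) \<cdot>\<^sub>m (Enn * ((Enn + A) * (Enn + B))) - Enn"
    unfolding rank_one_unit_def using in_order_carrier[OF in_order_completion]
    by (simp add: mult_diff_N mult_smult_N)
  then show ?thesis
    using one_plus_nn_unit(1) in_Kmonoid_carrier[OF B(1)]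
    unfolding Enn_mult_completion is_unit_O_def by (intro eq_matI) (auto simp: mult.assoc[symmetric])
qed

lemma jstar_rank_one_unit:
  assumes "jstar B = A"
  shows "jstar (rank_one_unit A B (1 + A $$ (n,n))) = rank_one_unit A B (1 + B $$ (n,n))"
proof -
  have "\<sigma> (A $$ (n,n)) = B $$ (n,n)"
    using jstar_nn[of A] jstar_jstar[OF in_Kmonoid_carrier[OF B(1)]] assms by simp
  then have "\<sigma> (inverse (1 + A $$ (n,n))) = inverse (1 + B $$ (n,n))"
    by (simp add: conj_inverse conj_add conj_one)
  then show ?thesis
    unfolding rank_one_unit_def using in_order_carrier[OF in_order_completion] jstar_completion[OF assms]
    by (simp add: jstar_diff jstar_smult jstar_one)
qed

lemma rank_one_completion:
  obtains k K where "k * K = 1\<^sub>m N" "K * k = 1\<^sub>m N" "in_Kmonoid k" "in_Kmonoid K"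
    "k * Enn = A" "Enn * K = B" "jstar B = A \<Longrightarrow> jstar K = k"
proof
  let ?k = "rank_one_unit A B (1 + B $$ (n,n))" and ?K = "rank_one_unit A B (1 + A $$ (n,n))"
  have "?k $$ (n,n) = A $$ (n,n)"
    using mult_Enn_index[OF in_order_carrier[OF in_order_rank_one_unit[OF one_plus_nn_unit(2)]] n_less_N n_less_N]
      rank_one_unit_mult_Enn by simp
  then show "in_Kmonoid ?k"
    using in_order_rank_one_unit[OF one_plus_nn_unit(2)] in_Kmonoid_nn[OF A(1)] unfolding in_Kmonoid_def by simp
  have "?K $$ (n,n) = B $$ (n,n)"
    using Enn_mult_index[OF in_order_carrier[OF in_order_rank_one_unit[OF one_plus_nn_unit(1)]] n_less_N n_less_N]
      Enn_mult_rank_one_unit by simp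
  then show "in_Kmonoid ?K"
    using in_order_rank_one_unit[OF one_plus_nn_unit(1)] in_Kmonoid_nn[OF B(1)] unfolding in_Kmonoid_def by simp
qed (use rank_one_unit_inverse rank_one_unit_mult_Enn Enn_mult_rank_one_unit jstar_rank_one_unit in auto)

end

section \<open>Conjugation into \<open>M\<close>\<close>

primrec power_sum :: "'e mat \<Rightarrow> nat \<Rightarrow> 'e mat" where
  "power_sum u 0 = 0\<^sub>m N N"
| "power_sum u (Suc k) = power_sum u k + u ^\<^sub>m k"

lemma power_sum_carrier: "u \<in> carrier_mat N N \<Longrightarrow> power_sum u k \<in> carrier_mat N N"
  by (induction k) auto

lemma in_order_power_sum:
  assumes u: "in_Kmonoid u"
  shows "in_order (power_sum u k) \<and> in_pow v m (power_sum u k $$ (n,n) - of_nat k)"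
proof (induction k)
  case (Suc k)
  have "power_sum u (Suc k) $$ (n,n) - of_nat (Suc k)
      = (power_sum u k $$ (n,n) - of_nat k) + ((u ^\<^sub>m k) $$ (n,n) - 1)"
    using power_sum_carrier[OF in_Kmonoid_carrier[OF u]] in_Kmonoid_carrier[OF u] by simp
  moreover have "in_pow v m ((power_sum u k $$ (n,n) - of_nat k) + ((u ^\<^sub>m k) $$ (n,n) - 1))"
    using Suc in_Kmonoid_nn[OF in_Kmonoid_pow[OF u]] in_pow_add by blast
  moreover have "in_order (power_sum u (Suc k))"
    using Suc in_order_add[OF _ in_Kmonoid_order[OF in_Kmonoid_pow[OF u]]] by simp
  ultimately show ?case by (simp add: algebra_simps)
qed (simp add: in_order_zero)

lemma mult_pow_mat_Suc:
  assumes u: "u \<in> carrier_mat N N" shows "u * u ^\<^sub>m k = u ^\<^sub>m Suc k"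
proof (induction k)
  case (Suc k)
  have "u * u ^\<^sub>m Suc k = (u * u ^\<^sub>m k) * u"
    by (simp only: pow_mat.simps(2) mult_assoc_N[OF u pow_carrier_mat[OF u] u])
  also have "\<dots> = u ^\<^sub>m Suc (Suc k)" by (simp only: Suc.IH pow_mat.simps(2))
  finally show ?case .
qed (use u in simp)

lemma mult_power_sum:
  assumes u: "u \<in> carrier_mat N N"
  shows "u * power_sum u k + 1\<^sub>m N = power_sum u k + u ^\<^sub>m k"
proof (induction k)
  case (Suc k)
  have S: "power_sum u k \<in> carrier_mat N N" and P: "u ^\<^sub>m k \<in> carrier_mat N N"
    using power_sum_carrier[OF u] u by auto
  have uS: "u * power_sum u k \<in> carrier_mat N N" and uP: "u * u ^\<^sub>m k \<in> carrier_mat N N"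
    using mult_carrier_mat[OF u S] mult_carrier_mat[OF u P] .
  have "u * power_sum u (Suc k) + 1\<^sub>m N = (u * power_sum u k + u * u ^\<^sub>m k) + 1\<^sub>m N"
    by (simp only: power_sum.simps(2) mult_add_N[OF u S P])
  also have "\<dots> = (u * power_sum u k + 1\<^sub>m N) + u * u ^\<^sub>m k"
    by (simp only: assoc_add_mat[OF uS uP one_carrier_mat] comm_add_mat[OF uP one_carrier_mat]
        assoc_add_mat[OF uS one_carrier_mat uP])
  also have "\<dots> = power_sum u (Suc k) + u ^\<^sub>m Suc k"
    by (simp only: Suc.IH mult_pow_mat_Suc[OF u] power_sum.simps(2))
  finally show ?case .
qed (use u in simp)

lemma exists_fixed_in_Kmonoid:
  assumes u: "in_Kmonoid u" and r: "is_unit_O v (of_nat r)" and ur: "u ^\<^sub>m r = 1\<^sub>m N"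
  shows "\<exists>W. in_Kmonoid W \<and> u * W = W"
proof -
  have u_carrier: "u \<in> carrier_mat N N" by (rule in_Kmonoid_carrier[OF u])
  define S where "S = power_sum u r"
  have S_carrier: "S \<in> carrier_mat N N" unfolding S_def by (rule power_sum_carrier[OF u_carrier])
  have S: "in_order S" "in_pow v m (S $$ (n,n) - of_nat r)"
    using in_order_power_sum[OF u] unfolding S_def by auto
  have "u * S + 1\<^sub>m N = S + 1\<^sub>m N" using mult_power_sum[OF u_carrier, of r] unfolding S_def ur .
  then have uS: "u * S = S"
  proof (intro eq_matI)
    fix i j assume "i < dim_row S" "j < dim_col S"
    then show "(u * S) $$ (i,j) = S $$ (i,j)"
      using arg_cong[OF \<open>u * S + 1\<^sub>m N = S + 1\<^sub>m N\<close>, of "\<lambda>X. X $$ (i,j)"] u_carrier S_carrier by simp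
  qed (use u_carrier S_carrier in auto)
  define W where "W = inverse (of_nat r) \<cdot>\<^sub>m S"
  have "u * W = W" unfolding W_def using mult_smult_N[OF u_carrier S_carrier] uS by simp
  moreover have "in_Kmonoid W"
  proof -
    have "W $$ (n,n) - 1 = inverse (of_nat r) * (S $$ (n,n) - of_nat r)"
      unfolding W_def using S_carrier r by (simp add: right_diff_distrib is_unit_O_def)
    then have "in_pow v m (W $$ (n,n) - 1)" using in_pow_inverse_unit_mult_iff[OF r] S(2) by simp
    moreover have "in_order W" unfolding W_def by (rule in_order_smult[OF in_O_inverse_unit[OF r] S(1)])
    ultimately show ?thesis unfolding in_Kmonoid_def by simp
  qed
  ultimately show ?thesis by blast
qed

lemma K_entry_iff:
  assumes "a \<le> 2" "b \<le> 2"
  shows "K_entry v m a b x = (if a = 1 \<and> b = 1 then in_pow v m (x - 1) else in_pow v (weight a b) x)"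
proof -
  have "a \<in> {0, 1, 2}" "b \<in> {0, 1, 2}" using assms by auto
  then show ?thesis
    unfolding K_entry_def weight_def lat1_def lat2_def using m_pos
    by (elim insertE emptyE) (simp_all add: max_def)
qed

lemma K_entry_blk_iff:
  "K_entry v m (blk n i) (blk n j) x \<longleftrightarrow>
     (if i = n \<and> j = n then in_pow v m (x - 1) else in_pow v (weight (blk n i) (blk n j)) x)"
  using K_entry_iff[OF blk_le_2 blk_le_2, of i j x] blk_eq_1_iff[of i] blk_eq_1_iff[of j] by presburger

lemma K_m_iff: "k \<in> K_m v n m \<longleftrightarrow> in_Kmonoid k \<and> is_unit_O v (det k)"
proof -
  have nn: "K_entry v m (blk n n) (blk n n) (k $$ (n,n)) \<longleftrightarrow> in_pow v m (k $$ (n,n) - 1)"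
    using K_entry_blk_iff[of n n] by simp
  have entry: "K_entry v m (blk n i) (blk n j) (k $$ (i,j)) \<longleftrightarrow> in_pow v (weight (blk n i) (blk n j)) (k $$ (i,j))"
    if "in_pow v m (k $$ (n,n) - 1)" for i j
    using K_entry_blk_iff[of i j] in_O_if_congruent_one[OF _ that] m_pos that by auto
  show ?thesis
  proof
    assume "k \<in> K_m v n m"
    then have k: "k \<in> carrier_mat N N" "is_unit_O v (det k)"
      and entries: "\<And>i j. i < N \<Longrightarrow> j < N \<Longrightarrow> K_entry v m (blk n i) (blk n j) (k $$ (i,j))"
      unfolding K_m_def N_def by auto
    have "in_pow v m (k $$ (n,n) - 1)" using entries[OF n_less_N n_less_N] nn by simp
    then show "in_Kmonoid k \<and> is_unit_O v (det k)"
      using k entries entry unfolding in_Kmonoid_def in_order_def by simp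
  next
    assume "in_Kmonoid k \<and> is_unit_O v (det k)"
    then show "k \<in> K_m v n m"
      using entry unfolding K_m_def in_Kmonoid_def in_order_def N_def[symmetric] by simp
  qed
qed

lemma K_m_if_inverse_pair:
  assumes k: "in_Kmonoid k" and K: "in_Kmonoid K" and kK: "k * K = 1\<^sub>m N"
  shows "k \<in> K_m v n m"
proof -
  have det: "det k * det K = 1"
    using det_mult[OF in_Kmonoid_carrier[OF k] in_Kmonoid_carrier[OF K]] kK by simp
  then have nonzero: "det k \<noteq> 0" "det K \<noteq> 0" by auto
  have "v (det k) + v (det K) = 0" using v_mult[OF nonzero] v_one det by simp
  moreover have "0 \<le> v (det k)" "0 \<le> v (det K)"
    using in_O_det[OF in_Kmonoid_order[OF k]] in_O_det[OF in_Kmonoid_order[OF K]] nonzero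
    unfolding in_pow_def by auto
  ultimately have "is_unit_O v (det k)" unfolding is_unit_O_def using nonzero by simp
  then show ?thesis using K_m_iff k by simp
qed

lemma K_m_minv:
  assumes "s \<in> K_m v n m"
  shows "in_Kmonoid s" "in_Kmonoid (minv s)" "s * minv s = 1\<^sub>m N" "minv s * s = 1\<^sub>m N"
    and "theta \<sigma> N s = jstar (minv s)"
proof -
  show s: "in_Kmonoid s" using assms K_m_iff by auto
  moreover have "is_unit_O v (det s)" using assms K_m_iff by auto
  ultimately show "in_Kmonoid (minv s)" "s * minv s = 1\<^sub>m N" "minv s * s = 1\<^sub>m N"
    using in_Kmonoid_minv by auto
  then show "theta \<sigma> N s = jstar (minv s)"
    using theta_eq_jstar in_Kmonoid_carrier s by blast
qed

text \<open>Unlike \<open>mult_carrier_mat\<close>, this rule has no inner dimension to guess, so the simplifier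
  can discharge the carrier conditions of \<open>mult_assoc_N\<close>.\<close>

lemma mult_carrier_N [simp]: "A \<in> carrier_mat N N \<Longrightarrow> B \<in> carrier_mat N N \<Longrightarrow> A * B \<in> carrier_mat N N"
  by simp

lemma mult_assoc_eq:
  assumes "A * B = C" "A \<in> carrier_mat N N" "B \<in> carrier_mat N N" "X \<in> carrier_mat N N"
  shows "A * (B * X) = C * X"
proof -
  have "A * (B * X) = (A * B) * X" using assms(2-4) by simp
  then show ?thesis unfolding assms(1) .
qed

lemma exists_normalizer:
  assumes W: "in_Kmonoid W" and T: "in_Kmonoid T" and TW: "jstar (T * W) = T * W"
  obtains \<mu> k K where "\<sigma> \<mu> = \<mu>" "k * K = 1\<^sub>m N" "K * k = 1\<^sub>m N" "in_Kmonoid k" "in_Kmonoid K"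
    "k * Enn = \<mu> \<cdot>\<^sub>m (W * Enn)" "Enn * K = \<mu> \<cdot>\<^sub>m (Enn * T)" "jstar T = W \<Longrightarrow> jstar K = k"
proof -
  have W_carrier: "W \<in> carrier_mat N N" and T_carrier: "T \<in> carrier_mat N N"
    using in_Kmonoid_carrier W T by auto
  define c where "c = (T * W) $$ (n,n)"
  have "\<sigma> c = c" using jstar_nn[of "T * W"] TW unfolding c_def by simp
  moreover have "in_pow v m (c - 1)" unfolding c_def by (rule in_Kmonoid_nn[OF in_Kmonoid_mult[OF T W]])
  ultimately obtain \<mu> where \<mu>: "\<sigma> \<mu> = \<mu>" "in_pow v m (\<mu> - 1)" "\<mu> * \<mu> * c = 1"
    using exists_inv_sqrt m_pos by blast
  define A where "A = \<mu> \<cdot>\<^sub>m (W * Enn)"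
  define B where "B = \<mu> \<cdot>\<^sub>m (Enn * T)"
  have A: "in_Kmonoid A" "A * Enn = A"
    unfolding A_def using W_carrier
    by (simp_all add: in_Kmonoid_smult[OF \<mu>(2)] in_Kmonoid_mult W in_Kmonoid_Enn smult_mult_N mult_assoc_N Enn_mult_Enn)
  have "Enn * (Enn * T) = Enn * T"
    by (simp only: mult_assoc_N[OF Enn_carrier Enn_carrier T_carrier, symmetric] Enn_mult_Enn)
  then have B: "in_Kmonoid B" "Enn * B = B"
    unfolding B_def using T_carrier
    by (simp_all add: in_Kmonoid_smult[OF \<mu>(2)] in_Kmonoid_mult T in_Kmonoid_Enn
        mult_smult_N[OF Enn_carrier mult_carrier_mat[OF Enn_carrier T_carrier]])
  have BA: "B * A = Enn"
  proof -
    have ET: "Enn * T \<in> carrier_mat N N" and WE: "W * Enn \<in> carrier_mat N N"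
      using W_carrier T_carrier by auto
    have "Enn * T * (W * Enn) = Enn * (T * W) * Enn"
      by (simp only: mult_assoc_N[OF Enn_carrier T_carrier WE] mult_assoc_N[OF T_carrier W_carrier Enn_carrier]
          mult_assoc_N[OF Enn_carrier mult_carrier_mat[OF T_carrier W_carrier] Enn_carrier])
    then have "Enn * T * (W * Enn) = c \<cdot>\<^sub>m Enn"
      unfolding c_def using Enn_sandwich[of "T * W"] W_carrier T_carrier by simp
    then have "B * A = \<mu> \<cdot>\<^sub>m (\<mu> \<cdot>\<^sub>m (c \<cdot>\<^sub>m Enn))"
      unfolding A_def B_def smult_mult_N[OF ET smult_carrier_mat[OF WE]] mult_smult_N[OF ET WE] by simp
    also have "\<dots> = (\<mu> * \<mu> * c) \<cdot>\<^sub>m Enn" by (rule eq_matI) (auto simp: mult.assoc)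
    finally show ?thesis unfolding \<mu>(3) by (intro eq_matI) auto
  qed
  have "jstar B = A" if "jstar T = W"
    unfolding A_def B_def jstar_smult[OF mult_carrier_mat[OF Enn_carrier T_carrier]]
      jstar_mult[OF Enn_carrier T_carrier] jstar_Enn that \<mu>(1) ..
  then show ?thesis
    using rank_one_completion[OF A B BA] that[of \<mu>] \<mu>(1) unfolding A_def B_def by metis
qed

lemma conjugate_twisted_into_M_if_fixed:
  assumes s: "s \<in> K_m v n m" and W: "in_Kmonoid W" and fixed: "s * theta \<sigma> N s * W = W"
  shows "\<exists>k\<in>K_m v n m. minv k * s * theta \<sigma> N k \<in> M_set v n m"
proof -
  define r where "r = minv s"
  have s_Kmonoid: "in_Kmonoid s" and r: "in_Kmonoid r" "s * r = 1\<^sub>m N" "r * s = 1\<^sub>m N"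
    and \<theta>s: "theta \<sigma> N s = jstar r"
    using K_m_minv[OF s] unfolding r_def by auto
  have s_carrier: "s \<in> carrier_mat N N" and r_carrier: "r \<in> carrier_mat N N" and W_carrier: "W \<in> carrier_mat N N"
    using in_Kmonoid_carrier s_Kmonoid r W by auto
  have fixed': "s * (jstar r * W) = W"
    using fixed \<theta>s s_carrier r_carrier W_carrier by (simp add: mult_assoc_N)
  have rW: "jstar r * W = r * W"
    using mult_assoc_eq[OF r(3) r_carrier s_carrier, of "jstar r * W"] fixed' W_carrier by (simp add: mult_assoc_N)
  define T where "T = jstar W * r"
  have T: "in_Kmonoid T" unfolding T_def by (intro in_Kmonoid_mult in_Kmonoid_jstar W r)
  have T_carrier: "T \<in> carrier_mat N N" by (rule in_Kmonoid_carrier[OF T])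
  have "jstar (T * W) = T * W"
    unfolding T_def using r_carrier W_carrier by (simp add: mult_assoc_N jstar_mult jstar_jstar rW)
  then obtain \<mu> k K where \<mu>: "\<sigma> \<mu> = \<mu>" and kK: "k * K = 1\<^sub>m N" "K * k = 1\<^sub>m N"
    and k: "in_Kmonoid k" and K: "in_Kmonoid K"
    and kE: "k * Enn = \<mu> \<cdot>\<^sub>m (W * Enn)" and EK: "Enn * K = \<mu> \<cdot>\<^sub>m (Enn * T)"
    using exists_normalizer[OF W T] by metis
  have k_carrier: "k \<in> carrier_mat N N" and K_carrier: "K \<in> carrier_mat N N"
    using in_Kmonoid_carrier k K by auto
  have "minv k = K" by (rule minv_eqI[OF k_carrier K_carrier kK(1)])
  moreover have "theta \<sigma> N k = jstar K" by (rule theta_eq_jstar[OF k_carrier K_carrier kK(1)])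
  moreover have "K * s * jstar K \<in> M_set v n m"
  proof (rule M_setI)
    show "in_order (K * s * jstar K)"
      by (intro in_order_mult in_order_jstar in_Kmonoid_order K s_Kmonoid)
    have "jstar K * Enn = jstar (Enn * K)" using K_carrier by (simp add: mult_assoc_N jstar_mult jstar_Enn)
    also have "\<dots> = \<mu> \<cdot>\<^sub>m (jstar r * (W * Enn))"
      unfolding EK T_def using r_carrier W_carrier \<mu> by (simp add: mult_assoc_N jstar_smult jstar_mult jstar_jstar jstar_Enn)
    finally have "s * (jstar K * Enn) = \<mu> \<cdot>\<^sub>m (W * Enn)"
      using mult_assoc_eq[OF fixed' s_carrier _ Enn_carrier] s_carrier r_carrier W_carrier
      by (simp add: mult_assoc_N mult_smult_N)
    then show "K * s * jstar K * Enn = Enn"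
      using mult_assoc_eq[OF kK(2) K_carrier k_carrier Enn_carrier] K_carrier s_carrier kE by (simp add: mult_assoc_N)
    have "Enn * (K * s * jstar K) = \<mu> \<cdot>\<^sub>m (Enn * (jstar W * jstar K))"
      using EK mult_assoc_eq[OF EK _ K_carrier, of "s * jstar K"]
        mult_assoc_eq[OF r(3) r_carrier s_carrier, of "jstar K"] K_carrier s_carrier r_carrier W_carrier
      by (simp add: mult_assoc_N T_def smult_mult_N)
    also have "\<dots> = jstar (k * Enn) * jstar K"
      unfolding kE using W_carrier \<mu> by (simp add: mult_assoc_N jstar_smult jstar_mult jstar_Enn smult_mult_N)
    also have "\<dots> = Enn * jstar (K * k)"
      using k_carrier K_carrier by (simp add: mult_assoc_N jstar_mult jstar_Enn)
    finally show "Enn * (K * s * jstar K) = Enn" unfolding kK(2) jstar_one by (simp add: mult_assoc_N)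
  qed
  ultimately show ?thesis using K_m_if_inverse_pair[OF k K kK(1)] by (intro bexI[of _ k]) simp_all
qed

lemma conjugate_into_M_if_fixed:
  assumes t: "t \<in> K_mH v \<sigma> n m" and W: "in_Kmonoid W" and fixed: "t * W = W"
  shows "\<exists>k\<in>K_mH v \<sigma> n m. minv k * t * k \<in> M_set v n m"
proof -
  have t_K_m: "t \<in> K_m v n m" and \<theta>t: "theta \<sigma> N t = t" using t unfolding K_mH_def H_grp_def N_def by auto
  define r where "r = minv t"
  have t_Kmonoid: "in_Kmonoid t" and r: "in_Kmonoid r" "t * r = 1\<^sub>m N" "r * t = 1\<^sub>m N"
    and "jstar r = t"
    using K_m_minv[OF t_K_m] \<theta>t unfolding r_def by auto
  have t_carrier: "t \<in> carrier_mat N N" and r_carrier: "r \<in> carrier_mat N N" and W_carrier: "W \<in> carrier_mat N N"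
    using in_Kmonoid_carrier t_Kmonoid r W by auto
  have Wr: "jstar W * r = jstar W"
    using \<open>jstar r = t\<close> jstar_jstar[OF r_carrier] jstar_mult[OF t_carrier W_carrier] fixed by simp
  have Wt: "jstar W * t = jstar W"
    using mult_assoc_eq[OF Wr jstar_carrier r_carrier t_carrier] r(3) by simp
  have "jstar (jstar W * W) = jstar W * W" using W_carrier by (simp add: jstar_mult jstar_jstar)
  then obtain \<mu> k K where \<mu>: "\<sigma> \<mu> = \<mu>" and kK: "k * K = 1\<^sub>m N" "K * k = 1\<^sub>m N"
    and k: "in_Kmonoid k" and K: "in_Kmonoid K"
    and kE: "k * Enn = \<mu> \<cdot>\<^sub>m (W * Enn)" and EK: "Enn * K = \<mu> \<cdot>\<^sub>m (Enn * jstar W)"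
    and hermitian: "jstar (jstar W) = W \<Longrightarrow> jstar K = k"
    using exists_normalizer[OF W in_Kmonoid_jstar[OF W]] by metis
  have k_carrier: "k \<in> carrier_mat N N" and K_carrier: "K \<in> carrier_mat N N"
    using in_Kmonoid_carrier k K by auto
  have "theta \<sigma> N k = k"
    using theta_eq_jstar[OF k_carrier K_carrier kK(1)] hermitian jstar_jstar[OF W_carrier] by simp
  moreover have k_K_m: "k \<in> K_m v n m" by (rule K_m_if_inverse_pair[OF k K kK(1)])
  then have "det k \<noteq> 0" unfolding K_m_iff is_unit_O_def by simp
  ultimately have "k \<in> K_mH v \<sigma> n m"
    using k_K_m k_carrier unfolding K_mH_def H_grp_def GL_def N_def by simp
  moreover have "minv k = K" by (rule minv_eqI[OF k_carrier K_carrier kK(1)])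
  moreover have "K * t * k \<in> M_set v n m"
  proof (rule M_setI)
    show "in_order (K * t * k)" by (intro in_order_mult in_Kmonoid_order K t_Kmonoid k)
    have "t * (k * Enn) = k * Enn"
      unfolding kE using mult_assoc_eq[OF fixed t_carrier W_carrier Enn_carrier] t_carrier W_carrier
      by (simp add: mult_smult_N)
    then show "K * t * k * Enn = Enn"
      using mult_assoc_eq[OF kK(2) K_carrier k_carrier Enn_carrier] K_carrier t_carrier k_carrier
      by (simp add: mult_assoc_N)
    have "Enn * (K * t * k) = \<mu> \<cdot>\<^sub>m (Enn * (jstar W * k))"
      using mult_assoc_eq[OF EK _ K_carrier, of "t * k"] mult_assoc_eq[OF Wt _ t_carrier k_carrier]
        K_carrier t_carrier k_carrier W_carrier
      by (simp add: mult_assoc_N smult_mult_N)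
    also have "\<dots> = Enn * K * k" unfolding EK using W_carrier k_carrier by (simp add: mult_assoc_N smult_mult_N)
    finally show "Enn * (K * t * k) = Enn"
      using K_carrier k_carrier kK(2) by (simp add: mult_assoc_N)
  qed
  ultimately show ?thesis by (intro bexI[of _ k]) simp_all
qed

lemma top_ss_sd_conjugate_into_M:
  assumes s: "s \<in> K_m v n m" and semisimple: "top_ss_sd \<sigma> N p (s, True)"
  shows "\<exists>k\<in>K_m v n m. minv k * s * theta \<sigma> N k \<in> M_set v n m"
proof -
  note s_minv = K_m_minv[OF s]
  obtain j where j: "(s * theta \<sigma> N s) ^\<^sub>m j = 1\<^sub>m N" "coprime j p"
    using top_ss_sd_twisted_power[OF in_Kmonoid_carrier[OF s_minv(1)] _ semisimple] s_minv(5) by auto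
  have "in_Kmonoid (s * theta \<sigma> N s)"
    unfolding s_minv(5) by (intro in_Kmonoid_mult in_Kmonoid_jstar s_minv(1,2))
  then obtain W where "in_Kmonoid W" "s * theta \<sigma> N s * W = W"
    using exists_fixed_in_Kmonoid of_nat_unit_if_coprime[OF prime_p residue_char j(2)] j(1) by blast
  then show ?thesis by (rule conjugate_twisted_into_M_if_fixed[OF s])
qed

lemma top_ss_conjugate_into_M:
  assumes t: "t \<in> K_mH v \<sigma> n m" and semisimple: "top_ss N p t"
  shows "\<exists>k\<in>K_mH v \<sigma> n m. minv k * t * k \<in> M_set v n m"
proof -
  have "in_Kmonoid t" using t K_m_iff unfolding K_mH_def by auto
  moreover obtain d where "t ^\<^sub>m d = 1\<^sub>m N" "coprime d p" using top_ss_power[OF semisimple] by blast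
  ultimately obtain W where "in_Kmonoid W" "t * W = W"
    using exists_fixed_in_Kmonoid of_nat_unit_if_coprime[OF prime_p residue_char] by blast
  then show ?thesis by (rule conjugate_into_M_if_fixed[OF t])
qed

end

lemma Km_blocks_if_local_field:
  assumes "nonarch_local_field v p" "2 < p" "unram_quad_conj v \<sigma>" "0 < m"
  shows "Km_blocks v \<sigma> p m"
  using assms unfolding nonarch_local_field_def residue_char_finite_def unram_quad_conj_def
  by unfold_locales auto

theorem proposition3p5:
  fixes v :: "'e::field_char_0 \<Rightarrow> int" and \<sigma> :: "'e \<Rightarrow> 'e"
    and p n :: nat and m :: int
  assumes local: "nonarch_local_field v p"
    and p2: "p > 2"
    and conj: "unram_quad_conj v \<sigma>"
    and m_pos: "m > 0"
  shows "(\<forall>s \<in> K_m v n m. top_ss_sd \<sigma> (2*n+1) p (s, True) \<longrightarrow>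
            (\<exists>k \<in> K_m v n m.
               sd_mult \<sigma> (2*n+1) (sd_mult \<sigma> (2*n+1) (minv k, False) (s, True)) (k, False)
                 \<in> M_set v n m \<times> {True}))
       \<and> (\<forall>t \<in> K_mH v \<sigma> n m. top_ss (2*n+1) p t \<longrightarrow>
            (\<exists>k \<in> K_mH v \<sigma> n m. minv k * t * k \<in> M_set v n m))"
proof -
  interpret Km_blocks v \<sigma> p n m by (rule Km_blocks_if_local_field[OF local p2 conj m_pos])
  have "sd_mult \<sigma> N (sd_mult \<sigma> N (minv k, False) (s, True)) (k, False) = (minv k * s * theta \<sigma> N k, True)"
    for k s by (simp add: sd_mult_def)
  then show ?thesis using top_ss_sd_conjugate_into_M top_ss_conjugate_into_M unfolding N_def by auto
qed

end
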